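(* Let $N_q\ge 1$ and let $(U,|\vec{0}\rangle)$ be a stabilizer ansatz on $N_q$ qubits (as defined in the context). Then the number of real parameters of the ansatz is $N_p=2(2^{N_q}-1)$, which is the minimal number of real parameters needed to reach every $N_q$-qubit state, and the ansatz spans the entire Hilbert space: for every unit vector $|\phi\rangle\in\mathbb{C}^{2^{N_q}}$ there exist parameters $\vec{\theta}\in\mathbb{R}^{N_p}$ and a phase $\varphi\in\mathbb{R}$ with $U(\vec{\theta})|\vec{0}\rangle=e^{i\varphi}|\phi\rangle$.
   Context: Qubits are labelled $1,\dots,N_q$; states are unit vectors in $\mathbb{C}^{2^{N_q}}$ identified up to a global phase. Pauli operators are tensor products of $I,X,Y,Z$. An $[m,m]$ stabilizer group on qubits $1,\dots,m$ is an abelian group of $2^m$ Hermitian Pauli operators (with signs $\pm1$) on these qubits, generated by $m$ independent commuting Hermitian Pauli operators, not containing $-I$; its common eigenvectors form an orthonormal basis of the $m$-qubit space (for $m=0$ it is $\{I\}$). A stabilizer ansatz on $N_q$ qubits is specified by choosing, for each $n=1,\dots,N_q$: (1) an $[n-1,n-1]$ stabilizer group $\mathcal{S}^{(n)}$ acting on qubits $1,\dots,n-1$; (2) a single-qubit state $|s_n\rangle$ of qubit $n$; (3) two single-qubit Pauli operators $R^{(n)}_0,R^{(n)}_1$ acting on qubit $n$ with $\langle s_n|R^{(n)}_j|s_n\rangle=0$ for $j=0,1$ and $\mathrm{Trace}[R^{(n)}_0R^{(n)}_1]=0$. The starting state is $|\vec{0}\rangle=\otimes_{n=1}^{N_q}|s_n\rangle$,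 and the parametrized unitary is $U(\vec{\theta})=U^{(N_q)}\cdots U^{(2)}U^{(1)}$ (so $U^{(1)}$ acts first) with $U^{(n)}=\Big(\prod_{S\in\mathcal{S}^{(n)}}e^{i\theta^n_{S,1}R^{(n)}_1S}\Big)\Big(\prod_{S\in\mathcal{S}^{(n)}}e^{i\theta^n_{S,0}R^{(n)}_0S}\Big)$, where $R^{(n)}_jS$ denotes $R^{(n)}_j$ on qubit $n$ tensored with $S$ on qubits $1,\dots,n-1$ (identity elsewhere); there is one independent real parameter $\theta^n_{S,j}$ for each $n$, each $S\in\mathcal{S}^{(n)}$ and each $j\in\{0,1\}$. *)

theory Defs
  imports "HOL-Analysis.Analysis"
begin

text \<open>A d x d complex matrix is a function nat => nat => complex whose entries
  outside {0..<d} x {0..<d} are zero; a vector in C^d is a function nat => complex,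
  only the entries below d being relevant.\<close>

type_synonym cmat = "nat \<Rightarrow> nat \<Rightarrow> complex"
type_synonym cvec = "nat \<Rightarrow> complex"

definition idm :: "nat \<Rightarrow> cmat" where
  "idm d = (\<lambda>i j. if i = j \<and> i < d then 1 else 0)"

definition mmul :: "nat \<Rightarrow> cmat \<Rightarrow> cmat \<Rightarrow> cmat" where
  "mmul d A B = (\<lambda>i j. if i < d \<and> j < d then (\<Sum>k<d. A i k * B k j) else 0)"

definition mvec :: "nat \<Rightarrow> cmat \<Rightarrow> cvec \<Rightarrow> cvec" where
  "mvec d A v = (\<lambda>i. if i < d then (\<Sum>k<d. A i k * v k) else 0)"

fun mpow :: "nat \<Rightarrow> cmat \<Rightarrow> nat \<Rightarrow> cmat" where
  "mpow d A 0 = idm d"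
| "mpow d A (Suc k) = mmul d A (mpow d A k)"

fun mprodl :: "nat \<Rightarrow> cmat list \<Rightarrow> cmat" where
  "mprodl d [] = idm d"
| "mprodl d (A # As) = mmul d A (mprodl d As)"

definition mexp :: "nat \<Rightarrow> cmat \<Rightarrow> cmat" where
  "mexp d A = (\<lambda>i j. \<Sum>k. mpow d A k i j / of_nat (fact k))"

datatype pauli = PI | PX | PY | PZ

definition sigma :: "pauli \<Rightarrow> cmat" where
  "sigma P a b = (if a < 2 \<and> b < 2 then
      (case P of
         PI \<Rightarrow> (if a = b then 1 else 0)
       | PX \<Rightarrow> (if a \<noteq> b then 1 else 0)
       | PY \<Rightarrow> (if a = 0 \<and> b = 1 then - \<i> else if a = 1 \<and> b = 0 then \<i> else 0)
       | PZ \<Rightarrow> (if a = b then (if a = 0 then 1 else -1) else 0))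
    else 0)"

text \<open>Tensor-product convention: qubit q (q = 1,2,...) corresponds to bit q-1 of the
  computational basis index.\<close>
definition qbit :: "nat \<Rightarrow> nat \<Rightarrow> nat" where
  "qbit q i = (i div 2 ^ (q - 1)) mod 2"

definition pauli_mat :: "nat \<Rightarrow> (nat \<Rightarrow> pauli) \<Rightarrow> cmat" where
  "pauli_mat m p = (\<lambda>i j. if i < 2 ^ m \<and> j < 2 ^ m then
      (\<Prod>q\<in>{1..m}. sigma (p q) (qbit q i) (qbit q j)) else 0)"

definition herm_pauli :: "nat \<Rightarrow> cmat \<Rightarrow> bool" where
  "herm_pauli m M \<longleftrightarrow> (\<exists>s p. (s = 1 \<or> s = -1) \<and> M = (\<lambda>i j. s * pauli_mat m p i j))"

definition gen_prod :: "nat \<Rightarrow> cmat list \<Rightarrow> nat set \<Rightarrow> cmat" where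
  "gen_prod m gs A = mprodl (2 ^ m) (map (\<lambda>i. gs ! i) (filter (\<lambda>i. i \<in> A) [0..<length gs]))"

text \<open>Since the generators commute
  and square to the identity, the generated group is the set of subset-products of the
  generators, and independence means that distinct subsets give distinct products.\<close>
definition stabilizer_group :: "nat \<Rightarrow> cmat set \<Rightarrow> bool" where
  "stabilizer_group m S \<longleftrightarrow>
     (\<exists>gs. length gs = m
        \<and> (\<forall>g\<in>set gs. herm_pauli m g)
        \<and> (\<forall>g\<in>set gs. \<forall>h\<in>set gs. mmul (2 ^ m) g h = mmul (2 ^ m) h g)
        \<and> inj_on (gen_prod m gs) (Pow {..<m})
        \<and> S = gen_prod m gs ` Pow {..<m})
     \<and> (\<forall>M\<in>S. herm_pauli m M)
     \<and> (\<forall>A\<in>S. \<forall>B\<in>S. mmul (2 ^ m) A B = mmul (2 ^ m) B A)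
     \<and> (\<lambda>i j. - idm (2 ^ m) i j) \<notin> S"

text \<open>R S as an operator on N qubits: the single-qubit matrix R on qubit n, the
  matrix S on qubits 1..n-1, identity on qubits n+1..N.\<close>
definition embed_RS :: "nat \<Rightarrow> nat \<Rightarrow> cmat \<Rightarrow> cmat \<Rightarrow> cmat" where
  "embed_RS N n R S = (\<lambda>r c.
     if r < 2 ^ N \<and> c < 2 ^ N \<and> r div 2 ^ n = c div 2 ^ n then
       R (qbit n r) (qbit n c) * S (r mod 2 ^ (n - 1)) (c mod 2 ^ (n - 1))
     else 0)"

definition rot :: "nat \<Rightarrow> real \<Rightarrow> cmat \<Rightarrow> cmat" where
  "rot N t P = mexp (2 ^ N) (\<lambda>i j. \<i> * of_real t * P i j)"

text \<open>The layer U^(n).  Sl n enumerates the stabilizer group S^(n); the parameter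
  theta n k j belongs to the element Sl n ! k and to j in {0,1}; r n j is the Pauli
  letter of R^(n)_j.\<close>
definition layer :: "nat \<Rightarrow> (nat \<Rightarrow> cmat list) \<Rightarrow> (nat \<Rightarrow> nat \<Rightarrow> pauli)
                      \<Rightarrow> (nat \<Rightarrow> nat \<Rightarrow> nat \<Rightarrow> real) \<Rightarrow> nat \<Rightarrow> cmat" where
  "layer N Sl r \<theta> n =
     mmul (2 ^ N)
       (mprodl (2 ^ N) (map (\<lambda>k. rot N (\<theta> n k 1) (embed_RS N n (sigma (r n 1)) (Sl n ! k)))
                            [0..<length (Sl n)]))
       (mprodl (2 ^ N) (map (\<lambda>k. rot N (\<theta> n k 0) (embed_RS N n (sigma (r n 0)) (Sl n ! k)))
                            [0..<length (Sl n)]))"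

definition ansatz_U :: "nat \<Rightarrow> (nat \<Rightarrow> cmat list) \<Rightarrow> (nat \<Rightarrow> nat \<Rightarrow> pauli)
                         \<Rightarrow> (nat \<Rightarrow> nat \<Rightarrow> nat \<Rightarrow> real) \<Rightarrow> cmat" where
  "ansatz_U N Sl r \<theta> = mprodl (2 ^ N) (map (layer N Sl r \<theta>) (rev [1..<N + 1]))"

definition start_state :: "nat \<Rightarrow> (nat \<Rightarrow> cvec) \<Rightarrow> cvec" where
  "start_state N s = (\<lambda>i. if i < 2 ^ N then (\<Prod>q\<in>{1..N}. s q (qbit q i)) else 0)"

definition param_index :: "nat \<Rightarrow> (nat \<Rightarrow> cmat list) \<Rightarrow> (nat \<times> nat \<times> nat) set" where
  "param_index N Sl = {(n, k, j). n \<in> {1..N} \<and> k < length (Sl n) \<and> j \<in> {0, 1}}"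

definition stabilizer_ansatz :: "nat \<Rightarrow> (nat \<Rightarrow> cmat list) \<Rightarrow> (nat \<Rightarrow> cvec)
                                  \<Rightarrow> (nat \<Rightarrow> nat \<Rightarrow> pauli) \<Rightarrow> bool" where
  "stabilizer_ansatz N Sl s r \<longleftrightarrow>
     (\<forall>n\<in>{1..N}.
        distinct (Sl n) \<and> stabilizer_group (n - 1) (set (Sl n))
      \<and> (cmod (s n 0))\<^sup>2 + (cmod (s n 1))\<^sup>2 = 1
      \<and> (\<forall>j\<in>{0,1::nat}. (\<Sum>a<2. \<Sum>b<2. cnj (s n a) * sigma (r n j) a b * s n b) = 0)
      \<and> (\<Sum>a<2. \<Sum>b<2. sigma (r n 0) a b * sigma (r n 1) b a) = 0)"

definition unit_vec :: "nat \<Rightarrow> cvec \<Rightarrow> bool" where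
  "unit_vec d v \<longleftrightarrow> (\<Sum>i<d. (cmod (v i))\<^sup>2) = 1"

end

theory Submission
  imports Defs
begin

text \<open>The ansatz prepares the target state one qubit at a time: after layers \<open>1..n\<close> the register
  holds \<open>\<phi>\<^sub>n \<otimes> s\<^sub>n\<^sub>+\<^sub>1 \<otimes> \<dots> \<otimes> s\<^sub>N\<close>.  The stabilizer group on the first \<open>n-1\<close> qubits has a
  joint eigenbasis \<open>e\<^sub>E\<close>, labelled by sign patterns \<open>E\<close>, on which every \<open>R\<^sub>j S\<close> acts as
  \<open>\<chi>\<^sub>E(S) R\<^sub>j\<close>.  Hence layer \<open>n\<close> maps \<open>e\<^sub>E \<otimes> s\<^sub>n\<close> to \<open>e\<^sub>E \<otimes> exp(i\<beta>\<^sub>E R\<^sub>1) exp(i\<gamma>\<^sub>E R\<^sub>0) s\<^sub>n\<close>, where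
  \<open>\<beta>, \<gamma>\<close> are Walsh transforms of the parameters and thus arbitrary.  Two rotations about the
  anticommuting axes \<open>R\<^sub>0, R\<^sub>1\<close> steer \<open>s\<^sub>n\<close> to any qubit state up to a phase, so writing
  \<open>\<phi>\<^sub>n = \<Sum>\<^sub>E e\<^sub>E \<otimes> w\<^sub>E\<close>, it suffices that the first \<open>n-1\<close> qubits hold
  \<open>\<Sum>\<^sub>E |w\<^sub>E| e\<^sup>i\<^sup>\<delta>\<^sup>E e\<^sub>E\<close>, which holds by induction.
  That \<open>2(2\<^sup>N - 1)\<close> parameters are needed follows from Sard's lemma: adjoining a phase and a scale
  to fewer parameters cannot cover all nonzero vectors of \<open>\<complex>\<^sup>2\<^sup>^\<^sup>N = \<real>\<^sup>2\<^sup>^\<^sup>N\<^sup>+\<^sup>1\<close>.\<close>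

definition restrict_vec :: "nat \<Rightarrow> cvec \<Rightarrow> cvec" where
  "restrict_vec d v = (\<lambda>i. if i < d then v i else 0)"

lemma mvec_restrict_vec: "mvec d A (restrict_vec d v) = mvec d A v"
  by (auto simp: mvec_def restrict_vec_def intro!: ext sum.cong)

lemma mvec_mmul: "mvec d (mmul d A B) v = mvec d A (mvec d B v)"
proof
  fix i show "mvec d (mmul d A B) v i = mvec d A (mvec d B v) i"
    unfolding mvec_def mmul_def
    by (auto simp: sum_distrib_left sum_distrib_right mult.assoc intro: sum.swap)
qed

lemma mmul_assoc: "mmul d (mmul d A B) C = mmul d A (mmul d B C)"
proof (intro ext)
  fix i j show "mmul d (mmul d A B) C i j = mmul d A (mmul d B C) i j"
    unfolding mmul_def
    by (auto simp: sum_distrib_left sum_distrib_right mult.assoc intro: sum.swap)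
qed

lemma mvec_idm: "mvec d (idm d) v = restrict_vec d v"
proof
  fix i
  have "(\<Sum>k<d. (if i = k then 1 else 0) * v k) = (\<Sum>k<d. if k = i then v i else 0)"
    by (rule sum.cong) auto
  then show "mvec d (idm d) v i = restrict_vec d v i"
    by (simp add: mvec_def idm_def restrict_vec_def)
qed

definition restrict_mat :: "nat \<Rightarrow> cmat \<Rightarrow> cmat" where
  "restrict_mat d P = (\<lambda>i j. if i < d \<and> j < d then P i j else 0)"

lemma mpow_scaled_involution:
  assumes "mmul d P P = idm d"
  shows "mpow d (\<lambda>i j. c * P i j) k
       = (\<lambda>i j. c ^ k * (if even k then idm d i j else restrict_mat d P i j))"
proof (induction k)
  case 0 then show ?case by simp
next
  case (Suc k)
  show ?case
  proof (cases "even k")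
    case True
    have "mmul d (\<lambda>i j. c * P i j) (\<lambda>i j. c ^ k * idm d i j)
        = (\<lambda>i j. c ^ Suc k * restrict_mat d P i j)"
      by (auto simp: mmul_def idm_def restrict_mat_def if_distrib sum.delta cong: if_cong intro!: ext)
    then show ?thesis using Suc True by simp
  next
    case False
    have "mmul d (\<lambda>i j. c * P i j) (\<lambda>i j. c ^ k * restrict_mat d P i j)
        = (\<lambda>i j. c ^ Suc k * mmul d P P i j)"
      by (auto simp: mmul_def restrict_mat_def sum_distrib_left mult_ac intro!: ext sum.cong)
    then show ?thesis using Suc False assms by simp
  qed
qed

lemma sums_exp_even_odd:
  fixes t :: real and a b :: complex
  shows "(\<lambda>k. (\<i> * of_real t) ^ k / of_nat (fact k) * (if even k then a else b))
           sums (of_real (cos t) * a + \<i> * of_real (sin t) * b)"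
proof -
  define z where "z = \<i> * complex_of_real t"
  have e1: "(\<lambda>k. z ^ k / of_nat (fact k)) sums exp z"
    using exp_converges[of z] by (simp add: scaleR_conv_of_real divide_inverse mult.commute)
  have e2: "(\<lambda>k. (- z) ^ k / of_nat (fact k)) sums exp (- z)"
    using exp_converges[of "-z"] by (simp add: scaleR_conv_of_real divide_inverse mult.commute)
  have s: "(\<lambda>k. (a / 2) * (z ^ k / of_nat (fact k)) + (a / 2) * ((- z) ^ k / of_nat (fact k))
              + ((b / 2) * (z ^ k / of_nat (fact k)) - (b / 2) * ((- z) ^ k / of_nat (fact k))))
          sums ((a / 2) * exp z + (a / 2) * exp (- z) + ((b / 2) * exp z - (b / 2) * exp (- z)))"
    by (intro sums_add sums_diff sums_mult e1 e2)
  have t1: "(a / 2) * (z ^ k / of_nat (fact k)) + (a / 2) * ((- z) ^ k / of_nat (fact k))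
              + ((b / 2) * (z ^ k / of_nat (fact k)) - (b / 2) * ((- z) ^ k / of_nat (fact k)))
         = z ^ k / of_nat (fact k) * (if even k then a else b)" for k
  proof (cases "even k")
    case True
    then have "(- z) ^ k = z ^ k" by (simp add: power_minus_even)
    moreover have "a / 2 * X + a / 2 * X + (b / 2 * X - b / 2 * X) = X * a" for X :: complex
      by (simp add: field_simps)
    ultimately show ?thesis using True by simp
  next
    case False
    then have "(- z) ^ k = - (z ^ k)" by (simp add: power_minus_odd)
    moreover have "a / 2 * X + a / 2 * (- X) + (b / 2 * X - b / 2 * (- X)) = X * b" for X :: complex
      by (simp add: field_simps)
    ultimately show ?thesis using False by simp
  qed
  have cz: "complex_of_real (cos t) = (exp z + exp (- z)) / 2"
    by (simp add: z_def cos_exp_eq flip: cos_of_real)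
  have sz: "\<i> * complex_of_real (sin t) = (exp z - exp (- z)) / 2"
    by (simp add: z_def sin_exp_eq field_simps flip: sin_of_real)
  have "(a / 2) * exp z + (a / 2) * exp (- z) + ((b / 2) * exp z - (b / 2) * exp (- z))
        = of_real (cos t) * a + \<i> * of_real (sin t) * b"
    by (simp add: cz sz field_simps)
  with s t1 show ?thesis by (simp add: z_def)
qed

lemma mexp_involution:
  assumes "mmul d P P = idm d"
  shows "mexp d (\<lambda>i j. \<i> * of_real t * P i j)
       = (\<lambda>i j. of_real (cos t) * idm d i j + \<i> * of_real (sin t) * restrict_mat d P i j)"
proof (intro ext)
  fix i j
  have "mexp d (\<lambda>i j. \<i> * of_real t * P i j) i j
     = (\<Sum>k. (\<i> * of_real t) ^ k / of_nat (fact k) * (if even k then idm d i j else restrict_mat d P i j))"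
    unfolding mexp_def mpow_scaled_involution[OF assms] by (simp add: power_mult_distrib)
  also have "\<dots> = of_real (cos t) * idm d i j + \<i> * of_real (sin t) * restrict_mat d P i j"
    by (rule sums_unique[symmetric]) (rule sums_exp_even_odd)
  finally show "mexp d (\<lambda>i j. \<i> * of_real t * P i j) i j = of_real (cos t) * idm d i j + \<i> * of_real (sin t) * restrict_mat d P i j" .
qed

lemma mvec_restrict_mat: "mvec d (restrict_mat d P) v = mvec d P v"
  by (auto simp: mvec_def restrict_mat_def intro!: ext)

lemma mvec_lin: "mvec d (\<lambda>i j. a * A i j + b * B i j) v = (\<lambda>i. a * mvec d A v i + b * mvec d B v i)"
  by (auto simp: mvec_def sum.distrib sum_distrib_left algebra_simps intro!: ext)

lemma mvec_rot:
  assumes "mmul (2 ^ N) P P = idm (2 ^ N)"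
  shows "mvec (2 ^ N) (rot N t P) v
       = (\<lambda>i. of_real (cos t) * restrict_vec (2 ^ N) v i + \<i> * of_real (sin t) * mvec (2 ^ N) P v i)"
  unfolding rot_def mexp_involution[OF assms] mvec_lin mvec_idm mvec_restrict_mat ..

definition supported_mat :: "nat \<Rightarrow> cmat \<Rightarrow> bool" where
  "supported_mat d A \<longleftrightarrow> (\<forall>i j. \<not> (i < d \<and> j < d) \<longrightarrow> A i j = 0)"

lemma supported_mat_mmul[simp]: "supported_mat d (mmul d A B)" by (simp add: supported_mat_def mmul_def)

lemma supported_mat_idm[simp]: "supported_mat d (idm d)" by (simp add: supported_mat_def idm_def)

lemma supported_mat_mprodl[simp]: "supported_mat d (mprodl d L)" by (cases L) auto

lemma restrict_mat_supported: "supported_mat d A \<Longrightarrow> restrict_mat d A = A"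
  by (auto simp: supported_mat_def restrict_mat_def intro!: ext)

lemma supported_mat_sum: "(\<And>k. k \<in> K \<Longrightarrow> supported_mat d (B k)) \<Longrightarrow> supported_mat d (\<lambda>a b. \<Sum>k\<in>K. f k * B k a b)"
  by (auto simp: supported_mat_def intro!: sum.neutral)

lemma mmul_idm_left: "mmul d (idm d) A = restrict_mat d A"
proof (intro ext)
  fix i j
  have "(\<Sum>k<d. (if i = k then 1 else 0) * A k j) = (\<Sum>k<d. if k = i then A i j else 0)"
    by (rule sum.cong) auto
  then show "mmul d (idm d) A i j = restrict_mat d A i j" by (simp add: mmul_def idm_def restrict_mat_def)
qed

lemma mmul_idm_right: "mmul d A (idm d) = restrict_mat d A"
proof (intro ext)
  fix i j
  have "(\<Sum>k<d. A i k * (if k = j then 1 else 0)) = (\<Sum>k<d. if k = j then A i j else 0)"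
    by (rule sum.cong) auto
  then show "mmul d A (idm d) i j = restrict_mat d A i j" by (simp add: mmul_def idm_def restrict_mat_def)
qed

lemma mmul_sum_right:
  "mmul d A (\<lambda>a b. \<Sum>k\<in>K. f k * B k a b) = (\<lambda>a b. \<Sum>k\<in>K. f k * mmul d A (B k) a b)"
  by (auto simp: mmul_def sum_distrib_left mult_ac intro!: ext sum.swap[THEN trans])

lemma mmul_sum_left:
  "mmul d (\<lambda>a b. \<Sum>k\<in>K. f k * B k a b) A = (\<lambda>a b. \<Sum>k\<in>K. f k * mmul d (B k) A a b)"
  by (auto simp: mmul_def sum_distrib_left sum_distrib_right mult_ac intro!: ext sum.swap[THEN trans])

lemma mmul_add_left:
  "mmul d (\<lambda>a b. A a b + c * B a b) M = (\<lambda>a b. mmul d A M a b + c * mmul d B M a b)"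
  by (auto simp: mmul_def sum.distrib sum_distrib_left algebra_simps intro!: ext)

lemma mmul_add_right:
  "mmul d M (\<lambda>a b. A a b + c * B a b) = (\<lambda>a b. mmul d M A a b + c * mmul d M B a b)"
  by (auto simp: mmul_def sum.distrib sum_distrib_left algebra_simps intro!: ext)

lemma mmul_scale_left: "mmul d (\<lambda>a b. c * A a b) M = (\<lambda>a b. c * mmul d A M a b)"
  by (auto simp: mmul_def sum_distrib_left mult_ac intro!: ext)

lemma mmul_scale_right: "mmul d M (\<lambda>a b. c * A a b) = (\<lambda>a b. c * mmul d M A a b)"
  by (auto simp: mmul_def sum_distrib_left mult_ac intro!: ext)

lemma mvec_scale: "mvec d (\<lambda>i j. c * A i j) v = (\<lambda>i. c * mvec d A v i)"
  by (auto simp: mvec_def sum_distrib_left mult_ac intro!: ext)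

lemma mvec_sum_vec: "mvec d A (\<lambda>i. \<Sum>E\<in>K. f E i) = (\<lambda>i. \<Sum>E\<in>K. mvec d A (f E) i)"
  by (auto simp: mvec_def sum_distrib_left intro!: ext sum.swap)

lemma mvec_scale_vec: "mvec d A (\<lambda>i. c * v i) = (\<lambda>i. c * mvec d A v i)"
  by (auto simp: mvec_def sum_distrib_left mult_ac intro!: ext)

lemma restrict_vec_sum: "(\<And>E. E \<in> K \<Longrightarrow> restrict_vec d (f E) = f E) \<Longrightarrow> restrict_vec d (\<lambda>i. \<Sum>E\<in>K. f E i) = (\<lambda>i. \<Sum>E\<in>K. f E i)"
  by (auto simp: restrict_vec_def fun_eq_iff intro!: sum.neutral) (metis)

lemma mvec_sum_mat: "mvec d (\<lambda>a b. \<Sum>E\<in>K. M E a b) v = (\<lambda>i. \<Sum>E\<in>K. mvec d (M E) v i)"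
  by (auto simp: mvec_def sum_distrib_right intro!: ext sum.swap)

definition basis_vec :: "nat \<Rightarrow> cvec" where "basis_vec j = (\<lambda>i. if i = j then 1 else 0)"

lemma mmul_column: "j < d \<Longrightarrow> mmul d A B i j = mvec d A (mvec d B (basis_vec j)) i"
proof -
  assume j: "j < d"
  have "mvec d B (basis_vec j) = (\<lambda>k. if k < d then B k j else 0)"
  proof
    fix k
    have "(\<Sum>l<d. B k l * (if l = j then 1 else 0)) = (\<Sum>l<d. if l = j then B k j else 0)"
      by (rule sum.cong) auto
    then show "mvec d B (basis_vec j) k = (if k < d then B k j else 0)" using j by (simp add: mvec_def basis_vec_def)
  qed
  then show ?thesis using j by (auto simp: mmul_def mvec_def intro!: sum.cong)
qed

lemma sum_Pow_insert:
  assumes "finite X" "x \<notin> X"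
  shows "(\<Sum>A\<in>Pow (insert x X). f A) = (\<Sum>A\<in>Pow X. f A) + (\<Sum>A\<in>Pow X. f (insert x A))"
proof -
  have "inj_on (insert x) (Pow X)" using assms(2) by (auto simp: inj_on_def)
  moreover have "Pow X \<inter> insert x ` Pow X = {}" using assms(2) by auto
  ultimately show ?thesis
    using assms(1) by (simp add: Pow_insert sum.union_disjoint sum.reindex)
qed

lemma mprodl_expand:
  assumes "distinct xs" "\<And>i. supported_mat d (G i)"
  shows "mprodl d (map (\<lambda>i a b. idm d a b + c i * G i a b) xs)
       = (\<lambda>a b. \<Sum>A\<in>Pow (set xs). (\<Prod>i\<in>A. c i) * mprodl d (map G (filter (\<lambda>i. i \<in> A) xs)) a b)"
  using assms(1)
proof (induction xs)
  case Nil then show ?case by simp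
next
  case (Cons x xs)
  define M where "M = (\<lambda>a b. \<Sum>A\<in>Pow (set xs). (\<Prod>i\<in>A. c i) * mprodl d (map G (filter (\<lambda>i. i \<in> A) xs)) a b)"
  have x: "x \<notin> set xs" and "distinct xs" using Cons.prems by auto
  have "supported_mat d M" unfolding M_def by (rule supported_mat_sum) simp
  then have "mprodl d (map (\<lambda>i a b. idm d a b + c i * G i a b) (x # xs))
      = (\<lambda>a b. M a b + c x * mmul d (G x) M a b)"
    using Cons.IH[OF \<open>distinct xs\<close>]
    by (simp add: M_def [symmetric] mmul_add_left mmul_idm_left restrict_mat_supported)
  also have "\<dots> = (\<lambda>a b. \<Sum>A\<in>Pow (set (x # xs)). (\<Prod>i\<in>A. c i) * mprodl d (map G (filter (\<lambda>i. i \<in> A) (x # xs))) a b)"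
  proof (intro ext)
    fix a b
    let ?F = "\<lambda>ys A. (\<Prod>i\<in>A. c i) * mprodl d (map G (filter (\<lambda>i. i \<in> A) ys)) a b"
    have old: "?F (x # xs) A = ?F xs A"
      and new: "?F (x # xs) (insert x A) = c x * ((\<Prod>i\<in>A. c i) * mmul d (G x) (mprodl d (map G (filter (\<lambda>i. i \<in> A) xs))) a b)"
      if "A \<in> Pow (set xs)" for A
    proof -
      have "filter (\<lambda>i. i \<in> insert x A) xs = filter (\<lambda>i. i \<in> A) xs" using x by (auto intro!: filter_cong)
      moreover have "(\<Prod>i\<in>insert x A. c i) = c x * (\<Prod>i\<in>A. c i)"
        using that x rev_finite_subset[OF finite_set] by (subst prod.insert) auto
      ultimately show "?F (x # xs) A = ?F xs A" "?F (x # xs) (insert x A) = c x * ((\<Prod>i\<in>A. c i) * mmul d (G x) (mprodl d (map G (filter (\<lambda>i. i \<in> A) xs))) a b)"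
        using that x by auto
    qed
    have "(\<Sum>A\<in>Pow (set (x # xs)). ?F (x # xs) A) = (\<Sum>A\<in>Pow (set xs). ?F (x # xs) A) + (\<Sum>A\<in>Pow (set xs). ?F (x # xs) (insert x A))"
      unfolding list.set(2) by (rule sum_Pow_insert[OF finite_set x])
    also have "\<dots> = (\<Sum>A\<in>Pow (set xs). ?F xs A)
        + (\<Sum>A\<in>Pow (set xs). c x * ((\<Prod>i\<in>A. c i) * mmul d (G x) (mprodl d (map G (filter (\<lambda>i. i \<in> A) xs))) a b))"
      by (intro arg_cong2[where f = "(+)"] sum.cong refl old new)
    also have "\<dots> = M a b + c x * mmul d (G x) M a b"
      by (simp add: M_def mmul_sum_right sum_distrib_left)
    finally show "M a b + c x * mmul d (G x) M a b = (\<Sum>A\<in>Pow (set (x # xs)). ?F (x # xs) A)" ..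
  qed
  finally show ?case .
qed

lemma sum_lessThan_2: "(\<Sum>k<2::nat. f k) = f 0 + f 1"
  by (simp add: numeral_2_eq_2)

lemma qbit_less_2[simp]: "qbit q i < 2"
  by (simp add: qbit_def)

lemma qbit_low:
  assumes "j < 2 ^ m" "1 \<le> q" "q \<le> m"
  shows "qbit q (j + i * 2 ^ m) = qbit q j"
proof -
  have qq: "q - 1 + (m - q + 1) = m" using assms by simp
  have e: "(2::nat) ^ m = 2 ^ (q - 1) * 2 ^ (m - q + 1)" by (metis qq power_add)
  have jj: "j + i * 2 ^ m = j + (i * 2 ^ (m - q + 1)) * 2 ^ (q - 1)" unfolding e by (simp add: mult_ac)
  have "(j + i * 2 ^ m) div 2 ^ (q - 1) = j div 2 ^ (q - 1) + i * 2 ^ (m - q + 1)"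
    unfolding jj by simp
  moreover have "(a + i * 2 ^ (m - q + 1)) mod 2 = a mod 2" for a :: nat
    by (simp add: mult.left_commute[of i 2])
  ultimately show ?thesis by (simp add: qbit_def)
qed

lemma qbit_high:
  assumes "j < 2 ^ m" "i < 2"
  shows "qbit (Suc m) (j + i * 2 ^ m) = i"
  using assms by (simp add: qbit_def)

lemma sum_prod_qbit:
  fixes F :: "nat \<Rightarrow> nat \<Rightarrow> 'a::comm_semiring_1"
  shows "(\<Sum>k<2 ^ m. \<Prod>q\<in>{1..m}. F q (qbit q k)) = (\<Prod>q\<in>{1..m}. \<Sum>b<2. F q b)"
proof (induction m)
  case 0 then show ?case by simp
next
  case (Suc m)
  have "(\<Sum>k<2 ^ Suc m. \<Prod>q\<in>{1..Suc m}. F q (qbit q k))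
      = (\<Sum>i<2. \<Sum>j<2 ^ m. \<Prod>q\<in>{1..Suc m}. F q (qbit q (j + i * 2 ^ m)))"
    by (simp add: sum_mult_product mult.commute)
  also have "\<dots> = (\<Sum>i<2. \<Sum>j<2 ^ m. F (Suc m) i * (\<Prod>q\<in>{1..m}. F q (qbit q j)))"
  proof (intro sum.cong refl)
 fix i j :: nat assume i: "i \<in> {..<2::nat}" and j: "j \<in> {..<2 ^ m}"
    have "{1..Suc m} = insert (Suc m) {1..m}" by auto
    then have "(\<Prod>q\<in>{1..Suc m}. F q (qbit q (j + i * 2 ^ m)))
        = F (Suc m) (qbit (Suc m) (j + i * 2 ^ m)) * (\<Prod>q\<in>{1..m}. F q (qbit q (j + i * 2 ^ m)))"
      by simp
    also have "\<dots> = F (Suc m) i * (\<Prod>q\<in>{1..m}. F q (qbit q j))"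
      using i j by (simp add: qbit_high qbit_low)
    finally show "(\<Prod>q\<in>{1..Suc m}. F q (qbit q (j + i * 2 ^ m))) = F (Suc m) i * (\<Prod>q\<in>{1..m}. F q (qbit q j))" .
  qed
  also have "\<dots> = (\<Sum>i<2. F (Suc m) i) * (\<Prod>q\<in>{1..m}. \<Sum>b<2. F q b)"
    by (simp only: Suc.IH[symmetric] sum_product)
  also have "\<dots> = (\<Prod>q\<in>{1..Suc m}. \<Sum>b<2. F q b)"
  proof -
    have "{1..Suc m} = insert (Suc m) {1..m}" by auto
    then show ?thesis by simp
  qed
  finally show ?case .
qed

lemma qbit_eqI:
  assumes "i < 2 ^ m" "j < 2 ^ m" "\<forall>q\<in>{1..m}. qbit q i = qbit q j"
  shows "i = j"
proof (rule ccontr)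
  assume ne: "i \<noteq> j"
  define F where "F = (\<lambda>q b. if b = qbit q j then (1::nat) else 0)"
  have "(\<Sum>k<2 ^ m. \<Prod>q\<in>{1..m}. F q (qbit q k)) = (\<Prod>q\<in>{1..m}. \<Sum>b<2. F q b)"
    by (rule sum_prod_qbit)
  also have "\<dots> = 1"
  proof (intro prod.neutral ballI)
    fix q have "qbit q j < 2" by simp
    then show "(\<Sum>b<2. F q b) = 1" unfolding F_def by (auto simp: sum_lessThan_2 less_2_cases_iff)
  qed
  finally have s1: "(\<Sum>k<2 ^ m. \<Prod>q\<in>{1..m}. F q (qbit q k)) = 1" .
  have pi: "(\<Prod>q\<in>{1..m}. F q (qbit q i)) = 1" "(\<Prod>q\<in>{1..m}. F q (qbit q j)) = 1"
    using assms(3) by (auto simp: F_def intro!: prod.neutral)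
  have "(\<Sum>k\<in>{i, j}. \<Prod>q\<in>{1..m}. F q (qbit q k)) \<le> (\<Sum>k<2 ^ m. \<Prod>q\<in>{1..m}. F q (qbit q k))"
    using assms(1,2) by (intro sum_mono2) auto
  then show False using s1 pi ne by simp
qed

lemma prod_qbit_eq_indicator:
  assumes "i < 2 ^ m" "j < 2 ^ m"
  shows "(\<Prod>q\<in>{1..m}. (if qbit q i = qbit q j then 1 else 0 :: complex)) = (if i = j then 1 else 0)"
proof (cases "i = j")
  case True then show ?thesis by simp
next
  case False
  then obtain q where "q \<in> {1..m}" "qbit q i \<noteq> qbit q j" using qbit_eqI[OF assms] by blast
  then have "\<exists>a\<in>{1..m}. (if qbit a i = qbit a j then 1 else 0::complex) = 0" by auto
  then show ?thesis using False by (simp only: prod_zero finite_atLeastAtMost) simp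
qed

lemma sigma_square_entry:
  assumes "a < 2" "b < 2"
  shows "(\<Sum>k<2. sigma p a k * sigma p k b) = (if a = b then 1 else 0)"
  using assms by (cases p) (auto simp: sum_lessThan_2 sigma_def less_2_cases_iff)

lemma sigma_hermitian: "cnj (sigma p b a) = sigma p a b"
  by (cases p) (auto simp: sigma_def)

lemma sigma_trace: "(\<Sum>a<2. sigma p a a) = (if p = PI then 2 else 0)"
  by (cases p) (auto simp: sum_lessThan_2 sigma_def)

lemma pauli_mat_square: "mmul (2 ^ m) (pauli_mat m p) (pauli_mat m p) = idm (2 ^ m)"
proof (intro ext)
  fix i j
  show "mmul (2 ^ m) (pauli_mat m p) (pauli_mat m p) i j = idm (2 ^ m) i j"
  proof (cases "i < 2 ^ m \<and> j < 2 ^ m")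
    case False then show ?thesis by (auto simp: mmul_def idm_def)
  next
    case True
    have "mmul (2 ^ m) (pauli_mat m p) (pauli_mat m p) i j
        = (\<Sum>k<2 ^ m. \<Prod>q\<in>{1..m}. sigma (p q) (qbit q i) (qbit q k) * sigma (p q) (qbit q k) (qbit q j))"
      using True by (simp add: mmul_def pauli_mat_def prod.distrib)
    also have "\<dots> = (\<Prod>q\<in>{1..m}. \<Sum>b<2. sigma (p q) (qbit q i) b * sigma (p q) b (qbit q j))"
      by (rule sum_prod_qbit)
    also have "\<dots> = (\<Prod>q\<in>{1..m}. (if qbit q i = qbit q j then 1 else 0))"
      by (intro prod.cong refl sigma_square_entry) auto
    also have "\<dots> = (if i = j then 1 else 0)"
      using True by (intro prod_qbit_eq_indicator) auto
    also have "\<dots> = idm (2 ^ m) i j"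
      using True by (simp add: idm_def)
    finally show ?thesis .
  qed
qed

lemma pauli_mat_hermitian: "cnj (pauli_mat m p j i) = pauli_mat m p i j"
  by (auto simp: pauli_mat_def sigma_hermitian)

lemma pauli_mat_trace:
  "(\<Sum>i<2 ^ m. pauli_mat m p i i) = (\<Prod>q\<in>{1..m}. if p q = PI then 2 else 0)"
proof -
  have "(\<Sum>i<2 ^ m. pauli_mat m p i i) = (\<Sum>i<2 ^ m. \<Prod>q\<in>{1..m}. sigma (p q) (qbit q i) (qbit q i))"
    by (simp add: pauli_mat_def)
  also have "\<dots> = (\<Prod>q\<in>{1..m}. \<Sum>b<2. sigma (p q) b b)"
    by (rule sum_prod_qbit)
  finally show ?thesis by (simp add: sigma_trace)
qed

lemma pauli_mat_all_PI:
  assumes "\<forall>q\<in>{1..m}. p q = PI"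
  shows "pauli_mat m p = idm (2 ^ m)"
proof (intro ext)
  fix i j
  show "pauli_mat m p i j = idm (2 ^ m) i j"
  proof (cases "i < 2 ^ m \<and> j < 2 ^ m")
    case False then show ?thesis by (auto simp: pauli_mat_def idm_def)
  next
    case True
    have "pauli_mat m p i j = (\<Prod>q\<in>{1..m}. (if qbit q i = qbit q j then 1 else 0))"
      using True assms by (auto simp: pauli_mat_def sigma_def intro!: prod.cong)
    also have "\<dots> = (if i = j then 1 else 0)"
      using True by (intro prod_qbit_eq_indicator) auto
    finally show ?thesis using True by (simp add: idm_def)
  qed
qed

lemma herm_pauli_square:
  assumes "herm_pauli m M"
  shows "mmul (2 ^ m) M M = idm (2 ^ m)"
proof -
  obtain s p where sp: "s = 1 \<or> s = -1" "M = (\<lambda>i j. s * pauli_mat m p i j)"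
    using assms unfolding herm_pauli_def by blast
  have "mmul (2 ^ m) M M = (\<lambda>i j. (s * s) * mmul (2 ^ m) (pauli_mat m p) (pauli_mat m p) i j)"
    unfolding sp(2) by (auto simp: mmul_def sum_distrib_left mult_ac intro!: ext)
  also have "\<dots> = idm (2 ^ m)" using sp(1) by (auto simp: pauli_mat_square)
  finally show ?thesis .
qed

lemma herm_pauli_hermitian:
  assumes "herm_pauli m M"
  shows "cnj (M j i) = M i j"
proof -
  obtain s p where sp: "s = 1 \<or> s = -1" "M = (\<lambda>i j. s * pauli_mat m p i j)"
    using assms unfolding herm_pauli_def by blast
  then show ?thesis by (auto simp: pauli_mat_hermitian)
qed

lemma herm_pauli_trace:
  assumes "herm_pauli m M"
  shows "(\<Sum>i<2 ^ m. M i i) = 0 \<or> M = idm (2 ^ m) \<or> M = (\<lambda>i j. - idm (2 ^ m) i j)"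
proof -
  obtain s p where sp: "s = 1 \<or> s = -1" "M = (\<lambda>i j. s * pauli_mat m p i j)"
    using assms unfolding herm_pauli_def by blast
  show ?thesis
  proof (cases "\<forall>q\<in>{1..m}. p q = PI")
    case True
    then show ?thesis using sp pauli_mat_all_PI[OF True] by auto
  next
    case False
    then obtain q where q: "q \<in> {1..m}" "p q \<noteq> PI" by auto
    have "(\<Sum>i<2 ^ m. M i i) = s * (\<Sum>i<2 ^ m. pauli_mat m p i i)"
      by (simp add: sp(2) sum_distrib_left)
    also have "\<dots> = 0" unfolding pauli_mat_trace using q
      by (simp, intro disjI2 prod_zero) (auto intro!: bexI[of _ q])
    finally show ?thesis by simp
  qed
qed

lemma sigma_square: "mmul 2 (sigma p) (sigma p) = idm 2"
proof (intro ext)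
  fix a b
  show "mmul 2 (sigma p) (sigma p) a b = idm 2 a b"
    using sigma_square_entry[of a b p] by (auto simp: mmul_def idm_def)
qed

lemma supported_sigma: "supported_mat 2 (sigma p)" by (simp add: supported_mat_def sigma_def)

lemma supported_herm_pauli: "herm_pauli m M \<Longrightarrow> supported_mat (2 ^ m) M"
  unfolding herm_pauli_def by (auto simp: supported_mat_def pauli_mat_def)

text \<open>\<open>x\<close> occupies qubits \<open>1..m\<close> (the low bits of the index) and \<open>y\<close> the qubits \<open>m+1..N\<close>;
  \<open>apply_low R\<close> acts on the lowest qubit of \<open>y\<close>.\<close>
definition tensor_vec :: "nat \<Rightarrow> nat \<Rightarrow> cvec \<Rightarrow> cvec \<Rightarrow> cvec" where
  "tensor_vec N m x y = (\<lambda>i. if i < 2 ^ N then x (i mod 2 ^ m) * y (i div 2 ^ m) else 0)"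

definition apply_low :: "cmat \<Rightarrow> cvec \<Rightarrow> cvec" where
  "apply_low R y = (\<lambda>h. \<Sum>b<2. R (h mod 2) b * y (h div 2 * 2 + b))"

lemma div_pow_Suc: "(x::nat) div 2 ^ Suc m = x div 2 ^ m div 2"
  by (simp only: power_Suc2 div_mult2_eq)

lemma low_high_less: "(l::nat) < 2 ^ m \<Longrightarrow> h < 2 ^ (N - m) \<Longrightarrow> m \<le> N \<Longrightarrow> l + h * 2 ^ m < 2 ^ N"
proof -
  assume a: "l < 2 ^ m" "h < 2 ^ (N - m)" "m \<le> N"
  have "l + h * 2 ^ m < 2 ^ m + h * 2 ^ m" using a by simp
  also have "\<dots> = (h + 1) * 2 ^ m" by simp
  also have "\<dots> \<le> 2 ^ (N - m) * 2 ^ m" using a by (intro mult_right_mono) auto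
  also have "\<dots> = 2 ^ N" using a by (simp flip: power_add)
  finally show ?thesis .
qed

lemma embed_RS_low_high:
  assumes "Suc m \<le> N" "i < 2 ^ N" "l < 2 ^ m" "h < 2 ^ (N - m)"
  shows "embed_RS N (Suc m) R S i (l + h * 2 ^ m)
       = (if h div 2 = i div 2 ^ Suc m then R (qbit (Suc m) i) (h mod 2) * S (i mod 2 ^ m) l else 0)"
proof -
  have "l + h * 2 ^ m < 2 ^ N" using assms by (intro low_high_less) auto
  moreover have "qbit (Suc m) (l + h * 2 ^ m) = h mod 2" using assms(3) by (simp add: qbit_def)
  moreover have "(l + h * 2 ^ m) div 2 ^ Suc m = h div 2" unfolding div_pow_Suc using assms(3) by simp
  ultimately show ?thesis using assms(2,3) unfolding embed_RS_def by simp
qed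

lemma embed_RS_tensor_vec:
  assumes "Suc m \<le> N"
  shows "mvec (2 ^ N) (embed_RS N (Suc m) R S) (tensor_vec N m x y)
       = tensor_vec N m (mvec (2 ^ m) S x) (apply_low R y)"
proof (rule ext)
  fix i
  show "mvec (2 ^ N) (embed_RS N (Suc m) R S) (tensor_vec N m x y) i
       = tensor_vec N m (mvec (2 ^ m) S x) (apply_low R y) i"
  proof (cases "i < 2 ^ N")
    case False then show ?thesis by (simp add: mvec_def tensor_vec_def)
  next
    case True
    define H where "H = i div 2 ^ Suc m"
    define Sx where "Sx = mvec (2 ^ m) S x (i mod 2 ^ m)"
    have e1: "(2::nat) ^ N = 2 ^ (N - m) * 2 ^ m" using assms by (simp flip: power_add)
    have e2: "(2::nat) ^ (N - m) = 2 ^ (N - Suc m) * 2" using assms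
      by (metis Suc_diff_Suc Suc_le_lessD power_Suc2)
    have H: "H < 2 ^ (N - Suc m)"
      using True unfolding H_def div_pow_Suc e1 e2 by (simp add: less_mult_imp_div_less)
    have "mvec (2 ^ N) (embed_RS N (Suc m) R S) (tensor_vec N m x y) i
        = (\<Sum>h<2 ^ (N - m). \<Sum>l<2 ^ m.
             embed_RS N (Suc m) R S i (l + h * 2 ^ m) * tensor_vec N m x y (l + h * 2 ^ m))"
      using True unfolding mvec_def e1 sum_mult_product by simp
    also have "\<dots> = (\<Sum>h<2 ^ (N - m). (if h div 2 = H then R (qbit (Suc m) i) (h mod 2) * y h else 0) * Sx)"
    proof (intro sum.cong refl)
      fix h :: nat assume h: "h \<in> {..<2 ^ (N - m)}"
      have "(\<Sum>l<2 ^ m. embed_RS N (Suc m) R S i (l + h * 2 ^ m) * tensor_vec N m x y (l + h * 2 ^ m))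
          = (\<Sum>l<2 ^ m. (if h div 2 = H then R (qbit (Suc m) i) (h mod 2) * y h else 0) * (S (i mod 2 ^ m) l * x l))"
        using assms True h low_high_less[of _ m h N]
        by (intro sum.cong refl) (simp add: embed_RS_low_high H_def tensor_vec_def)
      then show "(\<Sum>l<2 ^ m. embed_RS N (Suc m) R S i (l + h * 2 ^ m) * tensor_vec N m x y (l + h * 2 ^ m))
          = (if h div 2 = H then R (qbit (Suc m) i) (h mod 2) * y h else 0) * Sx"
        by (simp add: Sx_def mvec_def sum_distrib_left)
    qed
    also have "\<dots> = (\<Sum>h'<2 ^ (N - Suc m). \<Sum>b<2.
         (if h' = H then R (qbit (Suc m) i) b * y (b + h' * 2) else 0) * Sx)"
      unfolding e2 sum_mult_product by (intro sum.cong refl) auto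
    also have "\<dots> = (\<Sum>h'<2 ^ (N - Suc m). if h' = H then (\<Sum>b<2. R (qbit (Suc m) i) b * y (b + H * 2)) * Sx else 0)"
      by (intro sum.cong refl) (auto simp: sum_distrib_right)
    also have "\<dots> = (\<Sum>b<2. R (qbit (Suc m) i) b * y (b + H * 2)) * Sx"
      using H by simp
    also have "\<dots> = tensor_vec N m (mvec (2 ^ m) S x) (apply_low R y) i"
      using True unfolding H_def div_pow_Suc by (simp add: tensor_vec_def apply_low_def qbit_def Sx_def add.commute)
    finally show ?thesis .
  qed
qed

lemma apply_low_apply_low: "apply_low R (apply_low R' y) = apply_low (mmul 2 R R') y"
proof
  fix h
  have e: "(h div 2 * 2 + b) mod 2 = b" "(h div 2 * 2 + b) div 2 = h div 2" if "b < (2::nat)" for b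
    using that by auto
  have "apply_low R (apply_low R' y) h = (\<Sum>b<2. R (h mod 2) b * (\<Sum>b'<2. R' b b' * y (h div 2 * 2 + b')))"
    by (simp add: apply_low_def e sum_lessThan_2)
  also have "\<dots> = apply_low (mmul 2 R R') y h"
    by (simp add: apply_low_def mmul_def sum_lessThan_2 algebra_simps)
  finally show "apply_low R (apply_low R' y) h = apply_low (mmul 2 R R') y h" .
qed

lemma apply_low_idm: "apply_low (idm 2) y = y"
proof
  fix h :: nat
  have h: "h = h div 2 * 2 + h mod 2" by simp
  have "h mod 2 = 0 \<or> h mod 2 = 1" by auto
  then show "apply_low (idm 2) y h = y h"
  proof
    assume a: "h mod 2 = 0"
    then have "h div 2 * 2 = h" using h by simp
    then show ?thesis using a by (simp add: apply_low_def idm_def sum_lessThan_2)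
  next
    assume a: "h mod 2 = 1"
    then have "Suc (h div 2 * 2) = h" using h by simp
    then show ?thesis using a by (simp add: apply_low_def idm_def sum_lessThan_2)
  qed
qed

lemma apply_low_lin: "apply_low (\<lambda>a b. c1 * M1 a b + c2 * M2 a b) y = (\<lambda>h. c1 * apply_low M1 y h + c2 * apply_low M2 y h)"
  by (simp add: apply_low_def sum_lessThan_2 algebra_simps)

lemma apply_low_restrict_mat: "apply_low (restrict_mat 2 M) y = apply_low M y"
  by (simp add: apply_low_def restrict_mat_def sum_lessThan_2)

lemma tensor_vec_restrict_vec: "tensor_vec N m (restrict_vec (2 ^ m) x) y = tensor_vec N m x y"
  by (rule ext) (simp add: tensor_vec_def restrict_vec_def)

lemma restrict_vec_tensor_vec[simp]: "restrict_vec (2 ^ N) (tensor_vec N m x y) = tensor_vec N m x y"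
  by (auto simp: tensor_vec_def restrict_vec_def)

lemma tensor_vec_lin_right: "tensor_vec N m x (\<lambda>h. a * y h + b * y' h) = (\<lambda>i. a * tensor_vec N m x y i + b * tensor_vec N m x y' i)"
  by (auto simp: tensor_vec_def algebra_simps)

lemma tensor_vec_scale_left: "tensor_vec N m (\<lambda>l. c * x l) y = (\<lambda>i. c * tensor_vec N m x y i)"
  by (auto simp: tensor_vec_def algebra_simps)

lemma tensor_vec_sum_left: "tensor_vec N m (\<lambda>l. \<Sum>E\<in>K. f E l) y = (\<lambda>i. \<Sum>E\<in>K. tensor_vec N m (f E) y i)"
  by (auto simp: tensor_vec_def sum_distrib_right)

lemma basis_vec_tensor_vec:
  assumes "j < 2 ^ N"
  shows "restrict_vec (2 ^ N) (basis_vec j) = tensor_vec N m (basis_vec (j mod 2 ^ m)) (basis_vec (j div 2 ^ m))"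
proof
  fix i
  have "(i = j) \<longleftrightarrow> (i mod 2 ^ m = j mod 2 ^ m \<and> i div 2 ^ m = j div 2 ^ m)"
    by (metis div_mult_mod_eq)
  then show "restrict_vec (2 ^ N) (basis_vec j) i = tensor_vec N m (basis_vec (j mod 2 ^ m)) (basis_vec (j div 2 ^ m)) i"
    by (auto simp: restrict_vec_def tensor_vec_def basis_vec_def)
qed

lemma embed_RS_square:
  assumes mN: "Suc m \<le> N" and SS: "mmul (2 ^ m) S S = idm (2 ^ m)" and RR: "mmul 2 R R = idm 2"
  shows "mmul (2 ^ N) (embed_RS N (Suc m) R S) (embed_RS N (Suc m) R S) = idm (2 ^ N)"
proof (intro ext)
  fix i j
  let ?P = "embed_RS N (Suc m) R S"
  show "mmul (2 ^ N) ?P ?P i j = idm (2 ^ N) i j"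
  proof (cases "j < 2 ^ N")
    case False then show ?thesis by (simp add: mmul_def idm_def)
  next
    case True
    let ?x = "basis_vec (j mod 2 ^ m)" and ?y = "basis_vec (j div 2 ^ m)"
    have "mmul (2 ^ N) ?P ?P i j = mvec (2 ^ N) ?P (mvec (2 ^ N) ?P (basis_vec j)) i"
      using True by (rule mmul_column)
    also have "mvec (2 ^ N) ?P (basis_vec j) = mvec (2 ^ N) ?P (tensor_vec N m ?x ?y)"
    proof -
      have "mvec (2 ^ N) ?P (basis_vec j) = mvec (2 ^ N) ?P (restrict_vec (2 ^ N) (basis_vec j))" by (simp add: mvec_restrict_vec)
      then show ?thesis by (simp only: basis_vec_tensor_vec[where m=m, OF True])
    qed
    also have "mvec (2 ^ N) ?P (mvec (2 ^ N) ?P (tensor_vec N m ?x ?y))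
        = tensor_vec N m (mvec (2 ^ m) S (mvec (2 ^ m) S ?x)) (apply_low R (apply_low R ?y))"
      by (simp add: embed_RS_tensor_vec[OF mN])
    also have "\<dots> = tensor_vec N m ?x ?y"
      by (simp add: mvec_mmul[symmetric] SS mvec_idm tensor_vec_restrict_vec apply_low_apply_low RR apply_low_idm)
    also have "\<dots> = restrict_vec (2 ^ N) (basis_vec j)" by (simp add: basis_vec_tensor_vec[where m=m, OF True])
    finally show ?thesis by (simp add: restrict_vec_def basis_vec_def idm_def)
  qed
qed

section \<open>Walsh characters\<close>

definition sign_at :: "nat set \<Rightarrow> nat \<Rightarrow> complex" where
  "sign_at E i = (if i \<in> E then -1 else 1)"

text \<open>\<open>walsh E A\<close> is the eigenvalue of the product of the generators indexed by \<open>A\<close> on the joint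
  eigenspace where exactly the generators indexed by \<open>E\<close> have eigenvalue \<open>-1\<close>.\<close>
definition walsh :: "nat set \<Rightarrow> nat set \<Rightarrow> complex" where
  "walsh E A = (\<Prod>i\<in>A. sign_at E i)"

lemma sign_at_square[simp]: "sign_at E i * sign_at E i = 1" by (simp add: sign_at_def)

lemma walsh_eq_power: "finite A \<Longrightarrow> walsh E A = (-1) ^ card (A \<inter> E)"
  unfolding walsh_def sign_at_def using prod.inter_restrict[of A "\<lambda>_. -1::complex" E] by simp

lemma walsh_commute: "finite A \<Longrightarrow> finite E \<Longrightarrow> walsh E A = walsh A E"
  by (simp add: walsh_eq_power Int_commute)

lemma sum_Pow_prod:
  fixes f :: "nat \<Rightarrow> complex"
  assumes "finite M"
  shows "(\<Sum>A\<in>Pow M. \<Prod>i\<in>A. f i) = (\<Prod>i\<in>M. f i + 1)"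
  using prod_add[OF assms, of f "\<lambda>_. 1"] by simp

lemma walsh_orthogonal:
  assumes "finite M" "E \<subseteq> M" "E' \<subseteq> M"
  shows "(\<Sum>A\<in>Pow M. walsh E A * walsh E' A) = (if E = E' then 2 ^ card M else 0)"
proof -
  have "(\<Sum>A\<in>Pow M. walsh E A * walsh E' A) = (\<Sum>A\<in>Pow M. \<Prod>i\<in>A. sign_at E i * sign_at E' i)"
    unfolding walsh_def by (simp add: prod.distrib)
  also have "\<dots> = (\<Prod>i\<in>M. sign_at E i * sign_at E' i + 1)"
    by (rule sum_Pow_prod[OF assms(1)])
  also have "\<dots> = (if E = E' then 2 ^ card M else 0)"
  proof (cases "E = E'")
    case True then show ?thesis by simp
  next
    case False
    then obtain i where "i \<in> M" "(i \<in> E) \<noteq> (i \<in> E')" using assms by blast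
    then have "\<exists>i\<in>M. sign_at E i * sign_at E' i + 1 = 0" by (auto simp: sign_at_def)
    then show ?thesis using False assms(1) by simp
  qed
  finally show ?thesis .
qed

lemma sum_walsh:
  assumes "finite M" "A \<subseteq> M"
  shows "(\<Sum>E\<in>Pow M. walsh E A) = (if A = {} then 2 ^ card M else 0)"
proof -
  have fA: "finite A" using assms finite_subset by blast
  have "(\<Sum>E\<in>Pow M. walsh E A) = (\<Sum>E\<in>Pow M. walsh A E)"
    using assms fA by (intro sum.cong refl walsh_commute) (auto dest: finite_subset)
  also have "\<dots> = (\<Prod>i\<in>M. sign_at A i + 1)" unfolding walsh_def by (rule sum_Pow_prod[OF assms(1)])
  also have "\<dots> = (if A = {} then 2 ^ card M else 0)"
  proof (cases "A = {}")
    case True then show ?thesis by (simp add: sign_at_def)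
  next
    case False
    then obtain i where "i \<in> A" by blast
    then have "\<exists>i\<in>M. sign_at A i + 1 = 0" using assms by (auto simp: sign_at_def)
    then show ?thesis using False assms(1) by simp
  qed
  finally show ?thesis .
qed

lemma cnj_walsh: "cnj (walsh E A) = walsh E A"
  unfolding walsh_def sign_at_def by (induction A rule: infinite_finite_induct) auto

definition walsh_real :: "nat set \<Rightarrow> nat set \<Rightarrow> real" where
  "walsh_real E A = (-1) ^ card (A \<inter> E)"

lemma walsh_of_real: "finite A \<Longrightarrow> walsh E A = of_real (walsh_real E A)"
  by (simp add: walsh_eq_power walsh_real_def)

lemma walsh_real_cases: "walsh_real E A = 1 \<or> walsh_real E A = -1"
  by (cases "even (card (A \<inter> E))") (simp_all add: walsh_real_def)

lemma cos_mult_walsh_real: "cos (t * walsh_real E A) = cos t" and sin_mult_walsh_real: "sin (t * walsh_real E A) = walsh_real E A * sin t"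
  using walsh_real_cases[of E A] by auto

lemma walsh_real_orthogonal:
  assumes "finite M" "E \<subseteq> M" "E' \<subseteq> M"
  shows "(\<Sum>A\<in>Pow M. walsh_real E A * walsh_real E' A) = (if E = E' then 2 ^ card M else 0)"
proof -
  have "complex_of_real (\<Sum>A\<in>Pow M. walsh_real E A * walsh_real E' A) = (\<Sum>A\<in>Pow M. walsh E A * walsh E' A)"
    using assms(1) by (simp add: walsh_of_real finite_subset)
  also have "\<dots> = (if E = E' then 2 ^ card M else 0)" by (rule walsh_orthogonal[OF assms])
  finally show ?thesis by (metis (mono_tags) of_real_0 of_real_eq_iff of_real_numeral of_real_power)
qed

section \<open>The joint eigenbasis of a stabilizer group\<close>

text \<open>\<open>eigen_prod m gs E = \<Prod>\<^sub>i (I + sign_at E i g\<^sub>i)\<close> is \<open>2\<^sup>m\<close> times the projector onto the joint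
  eigenspace in which exactly the generators indexed by \<open>E\<close> have eigenvalue \<open>-1\<close>.\<close>
definition eigen_prod :: "nat \<Rightarrow> cmat list \<Rightarrow> nat set \<Rightarrow> cmat" where
  "eigen_prod m gs E = mprodl (2 ^ m) (map (\<lambda>i a b. idm (2 ^ m) a b + sign_at E i * (gs ! i) a b) [0..<m])"

lemma gen_prod_empty: "gen_prod m gs {} = idm (2 ^ m)"
  by (simp add: gen_prod_def)

locale stabilizer_gens =
  fixes m :: nat and gs :: "cmat list"
  assumes gens_length: "length gs = m"
    and gens_herm_pauli: "\<forall>g\<in>set gs. herm_pauli m g"
    and gens_commute: "\<forall>g\<in>set gs. \<forall>h\<in>set gs. mmul (2 ^ m) g h = mmul (2 ^ m) h g"
    and gen_prod_inj: "inj_on (gen_prod m gs) (Pow {..<m})"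
    and gen_prod_herm_pauli: "\<forall>A\<in>Pow {..<m}. herm_pauli m (gen_prod m gs A)"
    and minus_idm_notin: "(\<lambda>i j. - idm (2 ^ m) i j) \<notin> gen_prod m gs ` Pow {..<m}"
begin

lemma gen_herm_pauli: "i < m \<Longrightarrow> herm_pauli m (gs ! i)"
  using gens_herm_pauli gens_length by auto

lemma gen_square: "i < m \<Longrightarrow> mmul (2 ^ m) (gs ! i) (gs ! i) = idm (2 ^ m)"
  by (rule herm_pauli_square[OF gen_herm_pauli])

lemma gen_supported: "i < m \<Longrightarrow> supported_mat (2 ^ m) (gs ! i)"
  by (rule supported_herm_pauli[OF gen_herm_pauli])

lemma gen_commute: "i < m \<Longrightarrow> j < m \<Longrightarrow> mmul (2 ^ m) (gs ! i) (gs ! j) = mmul (2 ^ m) (gs ! j) (gs ! i)"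
  using gens_commute gens_length by auto

lemma eigen_prod_expand: "eigen_prod m gs E = (\<lambda>a b. \<Sum>A\<in>Pow {..<m}. walsh E A * gen_prod m gs A a b)"
proof -
  define G where "G = (\<lambda>i. if i < m then gs ! i else idm (2 ^ m))"
  have wG: "supported_mat (2 ^ m) (G i)" for i by (simp add: G_def gen_supported)
  have "eigen_prod m gs E = mprodl (2 ^ m) (map (\<lambda>i a b. idm (2 ^ m) a b + sign_at E i * G i a b) [0..<m])"
    unfolding eigen_prod_def G_def by (intro arg_cong[where f = "mprodl _"] map_cong) auto
  also have "\<dots> = (\<lambda>a b. \<Sum>A\<in>Pow (set [0..<m]). (\<Prod>i\<in>A. sign_at E i) * mprodl (2 ^ m) (map G (filter (\<lambda>i. i \<in> A) [0..<m])) a b)"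
    by (rule mprodl_expand) (simp_all add: wG)
  also have "\<dots> = (\<lambda>a b. \<Sum>A\<in>Pow {..<m}. walsh E A * gen_prod m gs A a b)"
  proof -
    have "map G (filter (\<lambda>i. i \<in> A) [0..<m]) = map ((!) gs) (filter (\<lambda>i. i \<in> A) [0..<length gs])" for A
      using gens_length by (auto simp: G_def)
    then show ?thesis by (simp add: gen_prod_def walsh_def atLeast0LessThan)
  qed
  finally show ?thesis .
qed

lemma gen_commute_factor:
  assumes "i < m" "j < m"
  shows "mmul (2 ^ m) (gs ! j) (\<lambda>a b. idm (2 ^ m) a b + c * (gs ! i) a b)
       = mmul (2 ^ m) (\<lambda>a b. idm (2 ^ m) a b + c * (gs ! i) a b) (gs ! j)"
  unfolding mmul_add_left mmul_add_right mmul_idm_left mmul_idm_right gen_commute[OF assms] ..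

lemma gen_mult_own_factor:
  assumes "j < m" "c = 1 \<or> c = -1"
  shows "mmul (2 ^ m) (gs ! j) (\<lambda>a b. idm (2 ^ m) a b + c * (gs ! j) a b)
       = (\<lambda>a b. c * (idm (2 ^ m) a b + c * (gs ! j) a b))"
  unfolding mmul_add_right mmul_idm_right gen_square[OF assms(1)] restrict_mat_supported[OF gen_supported[OF assms(1)]]
  using assms(2) by (auto simp: algebra_simps intro!: ext)

lemma gen_mult_factor_prod:
  assumes "distinct xs" "j \<in> set xs" "set xs \<subseteq> {..<m}"
  shows "mmul (2 ^ m) (gs ! j) (mprodl (2 ^ m) (map (\<lambda>i a b. idm (2 ^ m) a b + sign_at E i * (gs ! i) a b) xs))
       = (\<lambda>a b. sign_at E j * mprodl (2 ^ m) (map (\<lambda>i a b. idm (2 ^ m) a b + sign_at E i * (gs ! i) a b) xs) a b)"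
  using assms
proof (induction xs)
  case Nil then show ?case by simp
next
  case (Cons x xs)
  let ?F = "\<lambda>i a b. idm (2 ^ m) a b + sign_at E i * (gs ! i) a b"
  let ?M = "mprodl (2 ^ m) (map ?F xs)"
  have jm: "j < m" "x < m" using Cons.prems by auto
  show ?case
  proof (cases "x = j")
    case True
    have "mmul (2 ^ m) (gs ! j) (mmul (2 ^ m) (?F x) ?M) = mmul (2 ^ m) (mmul (2 ^ m) (gs ! j) (?F j)) ?M"
      using True by (simp add: mmul_assoc)
    also have "\<dots> = mmul (2 ^ m) (\<lambda>a b. sign_at E j * ?F j a b) ?M"
      by (subst gen_mult_own_factor[OF jm(1)]) (auto simp: sign_at_def)
    finally show ?thesis using True by (simp add: mmul_scale_left)
  next
    case False
    then have IH: "mmul (2 ^ m) (gs ! j) ?M = (\<lambda>a b. sign_at E j * ?M a b)"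
      using Cons by auto
    have "mmul (2 ^ m) (gs ! j) (mmul (2 ^ m) (?F x) ?M) = mmul (2 ^ m) (mmul (2 ^ m) (gs ! j) (?F x)) ?M"
      by (simp add: mmul_assoc)
    also have "\<dots> = mmul (2 ^ m) (?F x) (mmul (2 ^ m) (gs ! j) ?M)"
      by (simp only: gen_commute_factor[OF jm(2,1)] mmul_assoc)
    also have "\<dots> = (\<lambda>a b. sign_at E j * mmul (2 ^ m) (?F x) ?M a b)"
      by (simp only: IH mmul_scale_right)
    finally show ?thesis by simp
  qed
qed

lemma gen_mult_eigen_prod: "j < m \<Longrightarrow> mmul (2 ^ m) (gs ! j) (eigen_prod m gs E) = (\<lambda>a b. sign_at E j * eigen_prod m gs E a b)"
  unfolding eigen_prod_def by (rule gen_mult_factor_prod) auto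

lemma gen_list_mult_eigen_prod:
  assumes "distinct L" "set L \<subseteq> {..<m}"
  shows "mmul (2 ^ m) (mprodl (2 ^ m) (map ((!) gs) L)) (eigen_prod m gs E)
       = (\<lambda>a b. (\<Prod>i\<in>set L. sign_at E i) * eigen_prod m gs E a b)"
  using assms
proof (induction L)
  case Nil
  have "supported_mat (2 ^ m) (eigen_prod m gs E)" by (simp add: eigen_prod_def)
  then show ?case by (simp add: mmul_idm_left restrict_mat_supported)
next
  case (Cons x L)
  have "mmul (2 ^ m) (mprodl (2 ^ m) (map ((!) gs) (x # L))) (eigen_prod m gs E)
      = mmul (2 ^ m) (gs ! x) (mmul (2 ^ m) (mprodl (2 ^ m) (map ((!) gs) L)) (eigen_prod m gs E))"
    by (simp add: mmul_assoc)
  also have "\<dots> = (\<lambda>a b. (\<Prod>i\<in>set L. sign_at E i) * (sign_at E x * eigen_prod m gs E a b))"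
    using Cons by (simp add: mmul_scale_right gen_mult_eigen_prod)
  finally show ?case using Cons.prems by (simp add: mult_ac)
qed

lemma gen_prod_mult_eigen_prod:
  assumes "A \<subseteq> {..<m}"
  shows "mmul (2 ^ m) (gen_prod m gs A) (eigen_prod m gs E) = (\<lambda>a b. walsh E A * eigen_prod m gs E a b)"
proof -
  have "set (filter (\<lambda>i. i \<in> A) [0..<length gs]) = A" using assms gens_length by auto
  then show ?thesis unfolding gen_prod_def walsh_def
    by (subst gen_list_mult_eigen_prod) (use gens_length in auto)
qed

lemma eigen_prod_mult:
  assumes "E \<subseteq> {..<m}" "E' \<subseteq> {..<m}"
  shows "mmul (2 ^ m) (eigen_prod m gs E) (eigen_prod m gs E') = (\<lambda>a b. (if E = E' then 2 ^ m else 0) * eigen_prod m gs E' a b)"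
proof -
  have "mmul (2 ^ m) (eigen_prod m gs E) (eigen_prod m gs E') = (\<lambda>a b. \<Sum>A\<in>Pow {..<m}. walsh E A * mmul (2 ^ m) (gen_prod m gs A) (eigen_prod m gs E') a b)"
    by (subst eigen_prod_expand[of E]) (rule mmul_sum_left)
  also have "\<dots> = (\<lambda>a b. \<Sum>A\<in>Pow {..<m}. walsh E A * walsh E' A * eigen_prod m gs E' a b)"
    by (intro ext sum.cong refl) (auto simp: gen_prod_mult_eigen_prod)
  also have "\<dots> = (\<lambda>a b. (\<Sum>A\<in>Pow {..<m}. walsh E A * walsh E' A) * eigen_prod m gs E' a b)"
    by (simp add: sum_distrib_right)
  also have "\<dots> = (\<lambda>a b. (if E = E' then 2 ^ m else 0) * eigen_prod m gs E' a b)"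
    using walsh_orthogonal[of "{..<m}" E E'] assms by simp
  finally show ?thesis .
qed

lemma trace_gen_prod:
  assumes "A \<subseteq> {..<m}" "A \<noteq> {}"
  shows "(\<Sum>i<2 ^ m. gen_prod m gs A i i) = 0"
proof -
  have h: "herm_pauli m (gen_prod m gs A)" using gen_prod_herm_pauli assms by auto
  have "gen_prod m gs A \<noteq> idm (2 ^ m)"
  proof
    assume "gen_prod m gs A = idm (2 ^ m)"
    then have "gen_prod m gs A = gen_prod m gs {}" by (simp add: gen_prod_empty)
    then show False using gen_prod_inj assms by (auto dest: inj_onD)
  qed
  moreover have "gen_prod m gs A \<noteq> (\<lambda>i j. - idm (2 ^ m) i j)"
  proof
    assume "gen_prod m gs A = (\<lambda>i j. - idm (2 ^ m) i j)"
    then have "(\<lambda>i j. - idm (2 ^ m) i j) \<in> gen_prod m gs ` Pow {..<m}"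
      using assms(1) by (metis Pow_iff image_eqI)
    then show False using minus_idm_notin by blast
  qed
  ultimately show ?thesis using herm_pauli_trace[OF h] by auto
qed

lemma trace_eigen_prod:
  assumes "E \<subseteq> {..<m}"
  shows "(\<Sum>i<2 ^ m. eigen_prod m gs E i i) = 2 ^ m"
proof -
  have "(\<Sum>i<2 ^ m. eigen_prod m gs E i i) = (\<Sum>A\<in>Pow {..<m}. walsh E A * (\<Sum>i<2 ^ m. gen_prod m gs A i i))"
    by (simp add: eigen_prod_expand sum_distrib_left sum.swap[of _ "{..<2 ^ m}"])
  also have "\<dots> = (\<Sum>A\<in>{{}}. walsh E A * (\<Sum>i<2 ^ m. gen_prod m gs A i i))"
    by (rule sum.mono_neutral_right) (auto simp: trace_gen_prod)
  also have "\<dots> = 2 ^ m" by (simp add: walsh_def gen_prod_empty idm_def)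
  finally show ?thesis .
qed

lemma sum_eigen_prod: "(\<Sum>E\<in>Pow {..<m}. eigen_prod m gs E a b) = 2 ^ m * idm (2 ^ m) a b"
proof -
  have "(\<Sum>E\<in>Pow {..<m}. eigen_prod m gs E a b) = (\<Sum>A\<in>Pow {..<m}. (\<Sum>E\<in>Pow {..<m}. walsh E A) * gen_prod m gs A a b)"
  proof -
    have "(\<Sum>E\<in>Pow {..<m}. eigen_prod m gs E a b) = (\<Sum>E\<in>Pow {..<m}. \<Sum>A\<in>Pow {..<m}. walsh E A * gen_prod m gs A a b)"
      by (simp add: eigen_prod_expand)
    also have "\<dots> = (\<Sum>A\<in>Pow {..<m}. \<Sum>E\<in>Pow {..<m}. walsh E A * gen_prod m gs A a b)"
      by (rule sum.swap)
    finally show ?thesis by (simp add: sum_distrib_right)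
  qed
  also have "\<dots> = (\<Sum>A\<in>{{}}. (\<Sum>E\<in>Pow {..<m}. walsh E A) * gen_prod m gs A a b)"
    by (rule sum.mono_neutral_right) (auto simp: sum_walsh)
  also have "\<dots> = 2 ^ m * idm (2 ^ m) a b" by (simp add: sum_walsh gen_prod_empty)
  finally show ?thesis .
qed

lemma eigen_prod_hermitian: "cnj (eigen_prod m gs E b a) = eigen_prod m gs E a b"
proof -
  have "cnj (walsh E A * gen_prod m gs A b a) = walsh E A * gen_prod m gs A a b" if "A \<in> Pow {..<m}" for A
  proof -
    have "herm_pauli m (gen_prod m gs A)" using that gen_prod_herm_pauli by blast
    then show ?thesis by (simp add: cnj_walsh herm_pauli_hermitian)
  qed
  then show ?thesis unfolding eigen_prod_expand cnj_sum by (intro sum.cong refl) auto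
qed

end

lemma sum_sum_mult_cnj_eq_0D:
  fixes Q :: "nat \<Rightarrow> nat \<Rightarrow> complex"
  assumes "(\<Sum>i<d. \<Sum>k<d. Q i k * cnj (Q i k)) = 0" "i < d" "k < d"
  shows "Q i k = 0"
proof -
  have "complex_of_real (\<Sum>i<d. \<Sum>k<d. (cmod (Q i k))\<^sup>2) = 0"
    using assms(1) by (simp add: complex_norm_square[symmetric])
  then have "(\<Sum>i<d. \<Sum>k<d. (cmod (Q i k))\<^sup>2) = 0" by (simp only: of_real_eq_0_iff)
  then show ?thesis using assms(2,3) by (simp add: sum_nonneg_eq_0_iff sum_nonneg)
qed

lemma hermitian_column_norm:
  fixes P :: cmat
  assumes herm: "\<And>i j. cnj (P j i) = P i j"
    and idem: "\<And>i j. i < d \<Longrightarrow> j < d \<Longrightarrow> (\<Sum>k<d. P i k * P k j) = P i j"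
    and "j < d"
  shows "(\<Sum>i<d. P i j * cnj (P i j)) = P j j"
  using idem[OF assms(3) assms(3)] herm by (simp add: mult.commute)

text \<open>The Hilbert--Schmidt distance between a trace-one orthogonal projector and the rank-one
  projector built from one of its nonzero columns vanishes.\<close>

lemma hermitian_idempotent_eq_column_outer:
  fixes P :: cmat
  assumes herm: "\<And>i j. cnj (P j i) = P i j"
    and idem: "\<And>i j. i < d \<Longrightarrow> j < d \<Longrightarrow> (\<Sum>k<d. P i k * P k j) = P i j"
    and tr: "(\<Sum>i<d. P i i) = 1"
    and j0: "j0 < d" "P j0 j0 \<noteq> 0"
    and ik: "i < d" "k < d"
  shows "P i k = P i j0 * cnj (P k j0) / P j0 j0"
proof -
  define pc where "pc = P j0 j0"
  define u where "u = (\<lambda>i. P i j0)"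
  have pc0: "pc \<noteq> 0" and cpc: "cnj pc = pc" using j0(2) herm[of j0 j0] by (simp_all add: pc_def)
  have N: "(\<Sum>i<d. u i * cnj (u i)) = pc"
    unfolding u_def pc_def by (rule hermitian_column_norm[OF herm idem j0(1)])
  have Pu: "(\<Sum>k<d. P i k * u k) = u i" if "i < d" for i
    using idem[OF that j0(1)] by (simp add: u_def)
  have uP: "(\<Sum>i<d. cnj (u i) * P i k) = cnj (u k)" if "k < d" for k
    using idem[OF j0(1) that] herm by (simp add: u_def)
  define Q where "Q = (\<lambda>i k. P i k - u i * cnj (u k) / pc)"
  have expand: "Q i k * cnj (Q i k) = P i k * P k i - cnj (u i) * (P i k * u k) / pc
        - u i * (cnj (u k) * P k i) / pc + (u i * cnj (u i)) * (u k * cnj (u k)) / (pc * pc)" for i k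
    unfolding Q_def using pc0 herm[of k i] herm[of i k] by (simp add: cpc field_simps)
  have T1: "(\<Sum>i<d. \<Sum>k<d. P i k * P k i) = 1" using idem tr by simp
  have T2: "(\<Sum>i<d. \<Sum>k<d. cnj (u i) * (P i k * u k) / pc) = 1"
  proof -
    have "(\<Sum>i<d. \<Sum>k<d. cnj (u i) * (P i k * u k) / pc) = (\<Sum>i<d. cnj (u i) * (\<Sum>k<d. P i k * u k) / pc)"
      by (simp add: sum_distrib_left sum_divide_distrib)
    also have "\<dots> = (\<Sum>i<d. cnj (u i) * u i / pc)" by (rule sum.cong[OF refl]) (simp add: Pu)
    also have "\<dots> = (\<Sum>i<d. u i * cnj (u i)) / pc" by (simp add: sum_divide_distrib mult.commute)
    finally show ?thesis using N pc0 by simp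
  qed
  have T3: "(\<Sum>i<d. \<Sum>k<d. u i * (cnj (u k) * P k i) / pc) = 1"
  proof -
    have "(\<Sum>i<d. \<Sum>k<d. u i * (cnj (u k) * P k i) / pc) = (\<Sum>i<d. u i * (\<Sum>k<d. cnj (u k) * P k i) / pc)"
      by (simp add: sum_distrib_left sum_divide_distrib)
    also have "\<dots> = (\<Sum>i<d. u i * cnj (u i) / pc)" by (rule sum.cong[OF refl]) (simp add: uP)
    also have "\<dots> = (\<Sum>i<d. u i * cnj (u i)) / pc" by (simp add: sum_divide_distrib)
    finally show ?thesis using N pc0 by simp
  qed
  have T4: "(\<Sum>i<d. \<Sum>k<d. (u i * cnj (u i)) * (u k * cnj (u k)) / (pc * pc)) = 1"
    using N pc0 by (simp add: sum_product[symmetric] sum_divide_distrib[symmetric])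
  have "(\<Sum>i<d. \<Sum>k<d. Q i k * cnj (Q i k)) = 0"
    unfolding expand by (simp add: sum_subtractf sum.distrib T1 T2 T3 T4)
  then have "Q i k = 0" using ik by (rule sum_sum_mult_cnj_eq_0D)
  then show ?thesis by (simp add: Q_def u_def pc_def)
qed

lemma rank_one_projector:
  fixes P :: cmat and d :: nat
  assumes herm: "\<And>i j. cnj (P j i) = P i j"
    and idem: "\<And>i j. i < d \<Longrightarrow> j < d \<Longrightarrow> (\<Sum>k<d. P i k * P k j) = P i j"
    and tr: "(\<Sum>i<d. P i i) = 1"
  shows "\<exists>e. (\<Sum>i<d. (cmod (e i))\<^sup>2) = 1 \<and> (\<forall>i<d. \<forall>j<d. P i j = e i * cnj (e j))"
proof -
  obtain j0 where j0: "j0 < d" "P j0 j0 \<noteq> 0"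
    using tr by (metis (no_types, lifting) lessThan_iff sum.neutral zero_neq_one)
  define p where "p = (\<Sum>k<d. (cmod (P k j0))\<^sup>2)"
  have Pp: "P j0 j0 = of_real p"
    using hermitian_column_norm[OF herm idem j0(1)] by (simp add: p_def complex_norm_square[symmetric])
  have p0: "p > 0"
    using Pp j0(2) unfolding p_def by (metis of_real_0 order_less_le sum_nonneg zero_le_power2)
  define e where "e = (\<lambda>i. P i j0 / of_real (sqrt p))"
  have ee: "e i * cnj (e j) = P i j0 * cnj (P j j0) / P j0 j0" for i j
    using p0 by (simp add: e_def Pp field_simps flip: of_real_mult)
  have "complex_of_real (\<Sum>i<d. (cmod (e i))\<^sup>2) = (\<Sum>i<d. e i * cnj (e i))"
    by (simp add: complex_norm_square[symmetric])
  also have "\<dots> = 1"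
    using hermitian_column_norm[OF herm idem j0(1)] j0(2) by (simp add: ee flip: sum_divide_distrib)
  finally have "(\<Sum>i<d. (cmod (e i))\<^sup>2) = 1" by (metis of_real_eq_1_iff)
  moreover have "P i j = e i * cnj (e j)" if "i < d" "j < d" for i j
    using hermitian_idempotent_eq_column_outer[OF herm idem tr j0 that] by (simp add: ee)
  ultimately show ?thesis by blast
qed

definition eigen_proj :: "nat \<Rightarrow> cmat list \<Rightarrow> nat set \<Rightarrow> cmat" where
  "eigen_proj m gs E = (\<lambda>a b. (1 / 2 ^ m) * eigen_prod m gs E a b)"

lemma onb_coeff_combination:
  fixes e :: "'a \<Rightarrow> cvec"
  assumes "finite I" "E \<in> I"
    and ortho: "\<And>E E'. E \<in> I \<Longrightarrow> E' \<in> I \<Longrightarrow> (\<Sum>l<d. cnj (e E l) * e E' l) = (if E = E' then 1 else 0)"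
  shows "(\<Sum>l<d. cnj (e E l) * (\<Sum>E'\<in>I. c E' * e E' l)) = c E"
proof -
  have "(\<Sum>l<d. cnj (e E l) * (\<Sum>E'\<in>I. c E' * e E' l)) = (\<Sum>l<d. \<Sum>E'\<in>I. c E' * (cnj (e E l) * e E' l))"
    by (simp add: sum_distrib_left mult_ac)
  also have "\<dots> = (\<Sum>E'\<in>I. c E' * (\<Sum>l<d. cnj (e E l) * e E' l))"
    by (subst sum.swap) (simp add: sum_distrib_left)
  also have "\<dots> = (\<Sum>E'\<in>I. if E' = E then c E else 0)"
    using assms(2) ortho by (intro sum.cong) auto
  finally show ?thesis using assms(1,2) by simp
qed

lemma onb_combination_norm:
  fixes e :: "'a \<Rightarrow> cvec"
  assumes "finite I"
    and ortho: "\<And>E E'. E \<in> I \<Longrightarrow> E' \<in> I \<Longrightarrow> (\<Sum>l<d. cnj (e E l) * e E' l) = (if E = E' then 1 else 0)"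
  shows "(\<Sum>l<d. cnj (\<Sum>E\<in>I. c E * e E l) * (\<Sum>E\<in>I. c E * e E l)) = (\<Sum>E\<in>I. cnj (c E) * c E)"
proof -
  have "(\<Sum>l<d. cnj (\<Sum>E\<in>I. c E * e E l) * (\<Sum>E'\<in>I. c E' * e E' l))
      = (\<Sum>l<d. \<Sum>E\<in>I. cnj (c E) * cnj (e E l) * (\<Sum>E'\<in>I. c E' * e E' l))"
    by (simp only: cnj_sum complex_cnj_mult sum_distrib_right)
  also have "\<dots> = (\<Sum>E\<in>I. cnj (c E) * (\<Sum>l<d. cnj (e E l) * (\<Sum>E'\<in>I. c E' * e E' l)))"
    by (subst sum.swap) (simp add: sum_distrib_left mult.assoc)
  also have "\<dots> = (\<Sum>E\<in>I. cnj (c E) * c E)"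
    using onb_coeff_combination[OF assms(1) _ ortho] by simp
  finally show ?thesis .
qed

lemma onb_parseval:
  fixes e :: "'a \<Rightarrow> cvec"
  assumes complete: "\<And>l l'. l < d \<Longrightarrow> l' < d \<Longrightarrow> (\<Sum>E\<in>I. e E l * cnj (e E l')) = idm d l l'"
  shows "(\<Sum>E\<in>I. cnj (\<Sum>l<d. cnj (e E l) * x l) * (\<Sum>l<d. cnj (e E l) * x l)) = (\<Sum>l<d. cnj (x l) * x l)"
proof -
  have "(\<Sum>E\<in>I. cnj (\<Sum>l<d. cnj (e E l) * x l) * (\<Sum>l'<d. cnj (e E l') * x l'))
      = (\<Sum>E\<in>I. \<Sum>l'<d. \<Sum>l<d. cnj (x l) * x l' * (e E l * cnj (e E l')))"
    by (simp add: cnj_sum sum_product mult_ac)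
  also have "\<dots> = (\<Sum>l'<d. \<Sum>l<d. cnj (x l) * x l' * (\<Sum>E\<in>I. e E l * cnj (e E l')))"
    by (subst sum.swap, rule sum.cong[OF refl], subst sum.swap) (simp add: sum_distrib_left)
  also have "\<dots> = (\<Sum>l'<d. \<Sum>l<d. if l = l' then cnj (x l') * x l' else 0)"
    using complete by (intro sum.cong refl) (auto simp: idm_def)
  finally show ?thesis by simp
qed

context stabilizer_gens
begin

lemma eigen_proj_hermitian: "cnj (eigen_proj m gs E b a) = eigen_proj m gs E a b"
  by (simp add: eigen_proj_def eigen_prod_hermitian)

lemma eigen_proj_mult:
  assumes "E \<subseteq> {..<m}" "E' \<subseteq> {..<m}" "i < 2 ^ m" "j < 2 ^ m"
  shows "(\<Sum>k<2 ^ m. eigen_proj m gs E i k * eigen_proj m gs E' k j) = (if E = E' then eigen_proj m gs E i j else 0)"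
proof -
  have "(\<Sum>k<2 ^ m. eigen_prod m gs E i k * eigen_prod m gs E' k j) = mmul (2 ^ m) (eigen_prod m gs E) (eigen_prod m gs E') i j"
    using assms by (simp add: mmul_def)
  also have "\<dots> = (if E = E' then 2 ^ m else 0) * eigen_prod m gs E' i j"
    by (simp add: eigen_prod_mult[OF assms(1,2)])
  finally have e: "(\<Sum>k<2 ^ m. eigen_prod m gs E i k * eigen_prod m gs E' k j) = (if E = E' then 2 ^ m else 0) * eigen_prod m gs E' i j" .
  have "(\<Sum>k<2 ^ m. eigen_proj m gs E i k * eigen_proj m gs E' k j) = (1 / 2 ^ m) * (1 / 2 ^ m) * (\<Sum>k<2 ^ m. eigen_prod m gs E i k * eigen_prod m gs E' k j)"
    by (simp add: eigen_proj_def sum_distrib_left mult_ac)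
  also have "\<dots> = (if E = E' then eigen_proj m gs E i j else 0)"
    unfolding e by (simp add: eigen_proj_def)
  finally show ?thesis .
qed

lemma trace_eigen_proj: "E \<subseteq> {..<m} \<Longrightarrow> (\<Sum>i<2 ^ m. eigen_proj m gs E i i) = 1"
  unfolding eigen_proj_def sum_distrib_left[symmetric] by (simp add: trace_eigen_prod)

lemma sum_eigen_proj: "(\<Sum>E\<in>Pow {..<m}. eigen_proj m gs E a b) = idm (2 ^ m) a b"
  unfolding eigen_proj_def sum_distrib_left[symmetric] by (simp add: sum_eigen_prod)

lemma gen_prod_eigen_proj:
  assumes "A \<subseteq> {..<m}"
  shows "mvec (2 ^ m) (gen_prod m gs A) (mvec (2 ^ m) (eigen_proj m gs E) x) = (\<lambda>i. walsh E A * mvec (2 ^ m) (eigen_proj m gs E) x i)"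
proof -
  have "mmul (2 ^ m) (gen_prod m gs A) (eigen_proj m gs E) = (\<lambda>a b. walsh E A * eigen_proj m gs E a b)"
    unfolding eigen_proj_def mmul_scale_right gen_prod_mult_eigen_prod[OF assms] by (simp add: mult_ac)
  then show ?thesis by (simp add: mvec_mmul[symmetric] mvec_scale)
qed

lemma eigen_basis:
  obtains e where
    "\<And>E i j. E \<subseteq> {..<m} \<Longrightarrow> i < 2 ^ m \<Longrightarrow> j < 2 ^ m \<Longrightarrow> eigen_proj m gs E i j = e E i * cnj (e E j)"
    "\<And>E E'. E \<subseteq> {..<m} \<Longrightarrow> E' \<subseteq> {..<m} \<Longrightarrow> (\<Sum>l<2 ^ m. cnj (e E l) * e E' l) = (if E = E' then 1 else 0)"
proof -
  define d where "d = (2::nat) ^ m"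
  have "\<forall>E\<in>Pow {..<m}. \<exists>e. (\<Sum>i<d. (cmod (e i))\<^sup>2) = 1 \<and> (\<forall>i<d. \<forall>j<d. eigen_proj m gs E i j = e i * cnj (e j))"
  proof
    fix E assume E: "E \<in> Pow {..<m}"
    show "\<exists>e. (\<Sum>i<d. (cmod (e i))\<^sup>2) = 1 \<and> (\<forall>i<d. \<forall>j<d. eigen_proj m gs E i j = e i * cnj (e j))"
      unfolding d_def
    proof (rule rank_one_projector)
      show "cnj (eigen_proj m gs E j i) = eigen_proj m gs E i j" for i j by (rule eigen_proj_hermitian)
      show "(\<Sum>k<2 ^ m. eigen_proj m gs E i k * eigen_proj m gs E k j) = eigen_proj m gs E i j"
        if "i < 2 ^ m" "j < 2 ^ m" for i j
        using eigen_proj_mult[of E E i j] E that by simp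
      show "(\<Sum>i<2 ^ m. eigen_proj m gs E i i) = 1" using trace_eigen_proj E by simp
    qed
  qed
  then obtain e where e: "\<And>E. E \<subseteq> {..<m} \<Longrightarrow> (\<Sum>i<d. (cmod (e E i))\<^sup>2) = 1"
      "\<And>E i j. E \<subseteq> {..<m} \<Longrightarrow> i < d \<Longrightarrow> j < d \<Longrightarrow> eigen_proj m gs E i j = e E i * cnj (e E j)"
    by (metis Pow_iff)
  have ex: "\<exists>i<d. e F i \<noteq> 0" if "F \<subseteq> {..<m}" for F
  proof (rule ccontr)
    assume "\<not> (\<exists>i<d. e F i \<noteq> 0)"
    then have "(\<Sum>i<d. (cmod (e F i))\<^sup>2) = 0" by simp
    then show False using e(1)[OF that] by simp
  qed
  have "(\<Sum>l<d. cnj (e E l) * e E' l) = (if E = E' then 1 else 0)"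
    if hE: "E \<subseteq> {..<m}" "E' \<subseteq> {..<m}" for E E'
  proof (cases "E = E'")
    case True
    have "(\<Sum>l<d. cnj (e E l) * e E l) = of_real (\<Sum>i<d. (cmod (e E i))\<^sup>2)"
      by (simp only: of_real_sum complex_norm_square mult.commute)
    also have "\<dots> = 1" using e(1)[OF hE(1)] by (simp only: of_real_1)
    finally show ?thesis using True by simp
  next
    case False
    obtain i where i: "i < d" "e E i \<noteq> 0" using ex[OF hE(1)] by blast
    obtain j where j: "j < d" "e E' j \<noteq> 0" using ex[OF hE(2)] by blast
    have "(\<Sum>k<d. eigen_proj m gs E i k * eigen_proj m gs E' k j) = 0"
      using eigen_proj_mult[of E E' i j] hE False i j by (simp add: d_def)
    moreover have "(\<Sum>k<d. eigen_proj m gs E i k * eigen_proj m gs E' k j)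
        = e E i * (\<Sum>k<d. cnj (e E k) * e E' k) * cnj (e E' j)"
      using hE i j by (simp add: e(2) sum_distrib_left sum_distrib_right mult_ac)
    ultimately show ?thesis using False i j by simp
  qed
  then show thesis using that e(2) unfolding d_def by blast
qed

end

section \<open>Steering a single qubit\<close>

lemma exists_rotation_Re_orthogonal:
  fixes ws wt :: complex
  shows "\<exists>x. Re ((of_real (cos x) * ws + of_real (sin x) * wt)
              * cnj (- of_real (sin x) * ws + of_real (cos x) * wt)) = 0"
proof -
  define f where "f = (\<lambda>x. Re ((of_real (cos x) * ws + of_real (sin x) * wt)
                         * cnj (- of_real (sin x) * ws + of_real (cos x) * wt)))"
  have f0: "f 0 = Re (ws * cnj wt)" by (simp add: f_def)
  have fpi: "f (pi / 2) = - Re (ws * cnj wt)"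
  proof -
    have "f (pi / 2) = Re (wt * cnj (- ws))" by (simp add: f_def)
    also have "\<dots> = - Re (cnj (ws * cnj wt))" by simp
    finally show ?thesis by simp
  qed
  have "continuous_on {0..pi/2} f" unfolding f_def by (intro continuous_intros)
  then have "\<exists>x. f x = 0"
    using IVT2'[of f "pi/2" 0 0] IVT'[of f 0 0 "pi/2"] f0 fpi
    by (cases "Re (ws * cnj wt) \<ge> 0") force+
  then show ?thesis by (simp add: f_def)
qed

lemma unit_pair_Re_orthogonal_polar:
  fixes p q :: complex
  assumes unit: "(cmod p)\<^sup>2 + (cmod q)\<^sup>2 = 1" and orth: "Re (p * cnj q) = 0"
  shows "\<exists>th g. p = cis th * of_real (cos g) \<and> q = cis th * (\<i> * of_real (sin g))"
proof (cases "p = 0")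
  case True
  then have "(cmod q)\<^sup>2 = 1" using unit by simp
  then have q1: "cmod q = 1" by (simp add: power2_eq_1_iff) (use norm_ge_zero[of q] in linarith)
  have "- \<i> * q = cis (Arg (- \<i> * q))"
    using rcis_cmod_Arg[of "- \<i> * q"] q1 by (simp add: rcis_def norm_mult)
  then have "q = cis (Arg (- \<i> * q)) * \<i>" by (metis mult.commute mult_minus_left i_squared
    minus_minus mult.assoc mult.right_neutral power2_eq_square mult_minus1)
  then show ?thesis using True by (intro exI[of _ "Arg (- \<i> * q)"] exI[of _ "pi/2"]) simp
next
  case False
  define th where "th = Arg p"
  have pth: "p = cis th * of_real (cmod p)"
    using rcis_cmod_Arg[of p] by (simp add: th_def rcis_def mult.commute)
  define y where "y = q * cis (- th)"
  have qy: "q = cis th * y" by (simp add: y_def cis_mult flip: cis_inverse)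
  have "p * cnj q = of_real (cmod p) * cnj y"
    by (subst pth, subst qy) (simp add: cis_cnj cis_mult mult.commute mult.left_commute)
  then have "Re y = 0" using orth False by simp
  then have yI: "y = \<i> * of_real (Im y)" and "cmod y = \<bar>Im y\<bar>"
    by (simp_all add: complex_eq_iff cmod_eq_Im)
  then have "(cmod p)\<^sup>2 + (Im y)\<^sup>2 = 1" using unit by (simp add: qy norm_mult power2_abs)
  then obtain g where "cmod p = cos g" "Im y = sin g" by (metis sincos_total_2pi)
  then show ?thesis using pth qy yI by auto
qed

text \<open>Every unit vector of \<open>\<complex>\<^sup>2\<close> arises, up to a phase, from a rotation by angle \<open>b\<close>
  applied to \<open>(cos g, i sin g)\<close>; this is the normal form of two consecutive single-qubit
  rotations about anticommuting Pauli axes.\<close>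

lemma unit_pair_rotation_form:
  fixes ws wt :: complex
  assumes unit: "(cmod ws)\<^sup>2 + (cmod wt)\<^sup>2 = 1"
  shows "\<exists>b g th. ws = cis th * (of_real (cos g) * of_real (cos b) - \<i> * of_real (sin g) * of_real (sin b))
                \<and> wt = cis th * (\<i> * of_real (sin g) * of_real (cos b) + of_real (cos g) * of_real (sin b))"
proof -
  obtain x where "Re ((of_real (cos x) * ws + of_real (sin x) * wt)
              * cnj (- of_real (sin x) * ws + of_real (cos x) * wt)) = 0"
    using exists_rotation_Re_orthogonal by blast
  moreover define c s where "c = complex_of_real (cos x)" and "s = complex_of_real (sin x)"
  moreover define p q where "p = c * ws + s * wt" and "q = - s * ws + c * wt"
  ultimately have orth: "Re (p * cnj q) = 0" by simp
  have cs1: "c * c + s * s = 1" unfolding c_def s_def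
    by (metis of_real_1 of_real_add of_real_mult sin_cos_squared_add2 power2_eq_square add.commute)
  have "complex_of_real ((cmod p)\<^sup>2 + (cmod q)\<^sup>2) = (c * c + s * s) * (ws * cnj ws + wt * cnj wt)"
    unfolding of_real_add complex_norm_square p_def q_def by (simp add: c_def s_def algebra_simps)
  also have "\<dots> = complex_of_real ((cmod ws)\<^sup>2 + (cmod wt)\<^sup>2)"
    by (simp only: cs1 of_real_add complex_norm_square mult_1)
  also have "\<dots> = 1" using unit by simp
  finally have "(cmod p)\<^sup>2 + (cmod q)\<^sup>2 = 1" by (metis of_real_eq_1_iff)
  then obtain th g where thg: "p = cis th * of_real (cos g)" "q = cis th * (\<i> * of_real (sin g))"
    using unit_pair_Re_orthogonal_polar orth by blast
  have "c * p - s * q = (c * c + s * s) * ws" "s * p + c * q = (c * c + s * s) * wt"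
    unfolding p_def q_def by (simp_all add: algebra_simps)
  then have "ws = c * p - s * q" "wt = s * p + c * q" using cs1 by simp_all
  then show ?thesis using thg unfolding c_def s_def by (intro exI[of _ x] exI) (auto simp: algebra_simps)
qed

definition qip :: "cvec \<Rightarrow> cvec \<Rightarrow> complex" where
  "qip u v = (\<Sum>a<2. cnj (u a) * v a)"

definition qapply :: "cmat \<Rightarrow> cvec \<Rightarrow> cvec" where
  "qapply M v = (\<lambda>a. \<Sum>b<2. M a b * v b)"

text \<open>\<open>qrot t R = exp(i t R)\<close> whenever \<open>R\<^sup>2 = I\<close>.\<close>
definition qrot :: "real \<Rightarrow> cmat \<Rightarrow> cmat" where
  "qrot t R = (\<lambda>a b. of_real (cos t) * idm 2 a b + \<i> * of_real (sin t) * R a b)"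

lemma qip_cong: "(\<And>a. a < 2 \<Longrightarrow> x a = x' a) \<Longrightarrow> (\<And>a. a < 2 \<Longrightarrow> y a = y' a) \<Longrightarrow> qip x y = qip x' y'"
  by (simp add: qip_def less_2_cases_iff sum_lessThan_2)

lemma qapply_cong: "(\<And>a. a < 2 \<Longrightarrow> x a = x' a) \<Longrightarrow> qapply M x = qapply M x'"
  by (simp add: qapply_def less_2_cases_iff sum_lessThan_2)

lemma qip_lin_right: "qip u (\<lambda>a. x * v a + y * w a) = x * qip u v + y * qip u w"
  by (simp add: qip_def sum_lessThan_2 algebra_simps)

lemma qip_lin_left: "qip (\<lambda>a. x * v a + y * w a) u = cnj x * qip v u + cnj y * qip w u"
  by (simp add: qip_def sum_lessThan_2 algebra_simps)

lemma qip_scale_right: "qip u (\<lambda>a. x * v a) = x * qip u v"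
  by (simp add: qip_def sum_lessThan_2 algebra_simps)

lemma qip_scale_left: "qip (\<lambda>a. x * v a) u = cnj x * qip v u"
  by (simp add: qip_def sum_lessThan_2 algebra_simps)

lemma cnj_qip: "cnj (qip u v) = qip v u"
  by (simp add: qip_def sum_lessThan_2 mult.commute)

lemma qapply_scale: "qapply M (\<lambda>a. x * v a) = (\<lambda>a. x * qapply M v a)"
  by (simp add: qapply_def sum_lessThan_2 algebra_simps)

lemma qapply_sigma_sigma: "a < 2 \<Longrightarrow> qapply (sigma p) (qapply (sigma p) x) a = x a"
  by (cases p) (auto simp: qapply_def sigma_def sum_lessThan_2 less_2_cases_iff)

lemma qapply_sigma_anticommute: "p \<noteq> q \<Longrightarrow> p \<noteq> PI \<Longrightarrow> q \<noteq> PI \<Longrightarrow> a < 2 \<Longrightarrow>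
    qapply (sigma p) (qapply (sigma q) x) a = - qapply (sigma q) (qapply (sigma p) x) a"
  by (cases p; cases q) (auto simp: qapply_def sigma_def sum_lessThan_2 less_2_cases_iff)

lemma qip_sigma_hermitian: "qip (qapply (sigma p) x) y = qip x (qapply (sigma p) y)"
  by (cases p) (auto simp: qip_def qapply_def sigma_def sum_lessThan_2 algebra_simps)

lemma qubit_onb_expansion:
  assumes uu: "qip u u = 1" and vv: "qip v v = 1" and uv: "qip u v = 0" and a: "a < 2"
  shows "x a = qip u x * u a + qip v x * v a"
proof -
  define y where "y = (\<lambda>a. x a - qip u x * u a - qip v x * v a)"
  have vu: "qip v u = 0" using uv cnj_qip[of u v] by simp
  have yu: "qip u y = 0"
  proof -
    have "qip u y = qip u x - qip u x * qip u u - qip v x * qip u v"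
      by (simp add: y_def qip_def sum_lessThan_2 algebra_simps)
    then show ?thesis using uu uv by simp
  qed
  have yv: "qip v y = 0"
  proof -
    have "qip v y = qip v x - qip u x * qip v u - qip v x * qip v v"
      by (simp add: y_def qip_def sum_lessThan_2 algebra_simps)
    then show ?thesis using vv vu by simp
  qed
  define D where "D = cnj (u 0) * cnj (v 1) - cnj (u 1) * cnj (v 0)"
  have "D * cnj D = qip u u * qip v v - qip u v * qip v u"
    by (simp add: D_def qip_def sum_lessThan_2 algebra_simps)
  then have "D * cnj D = 1" using uu vv uv by simp
  then have D0: "D \<noteq> 0" by auto
  have e1: "cnj (u 0) * y 0 + cnj (u 1) * y 1 = 0" using yu by (simp add: qip_def sum_lessThan_2)
  have e2: "cnj (v 0) * y 0 + cnj (v 1) * y 1 = 0" using yv by (simp add: qip_def sum_lessThan_2)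
  have "D * y 0 = cnj (v 1) * (cnj (u 0) * y 0 + cnj (u 1) * y 1) - cnj (u 1) * (cnj (v 0) * y 0 + cnj (v 1) * y 1)"
    by (simp add: D_def algebra_simps)
  then have y0: "y 0 = 0" using e1 e2 D0 by simp
  have "D * y 1 = cnj (u 0) * (cnj (v 0) * y 0 + cnj (v 1) * y 1) - cnj (v 0) * (cnj (u 0) * y 0 + cnj (u 1) * y 1)"
    by (simp add: D_def algebra_simps)
  then have y1: "y 1 = 0" using e1 e2 D0 by simp
  have "y a = 0" using a y0 y1 by (auto simp: less_2_cases_iff)
  then have "x a - qip u x * u a - qip v x * v a = 0" by (simp add: y_def)
  then show ?thesis by (simp add: algebra_simps)
qed

lemma qip_qapply_sigma_self: "qip (qapply (sigma p) x) (qapply (sigma p) x) = qip x x"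
proof -
  have "qip (qapply (sigma p) x) (qapply (sigma p) x) = qip x (qapply (sigma p) (qapply (sigma p) x))"
    by (rule qip_sigma_hermitian)
  also have "\<dots> = qip x x" by (rule qip_cong) (simp_all add: qapply_sigma_sigma)
  finally show ?thesis .
qed

lemma imaginary_unit_cases:
  fixes c :: complex
  assumes "cnj c = - c" "c * cnj c = 1"
  shows "c = \<i> \<or> c = - \<i>"
proof -
  have "Re c = 0" using assms(1) by (simp add: complex_eq_iff)
  moreover have "(Re c)\<^sup>2 + (Im c)\<^sup>2 = 1" using assms(2)
    by (simp add: complex_eq_iff power2_eq_square algebra_simps)
  ultimately have "Im c = 1 \<or> Im c = -1" by (simp add: power2_eq_1_iff)
  then show ?thesis using \<open>Re c = 0\<close> by (auto simp: complex_eq_iff)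
qed

lemma qubit_frame:
  assumes p0: "p0 \<noteq> PI" and p1: "p1 \<noteq> PI" and p01: "p0 \<noteq> p1"
    and ss: "qip s s = 1" and s0: "qip s (qapply (sigma p0) s) = 0" and s1: "qip s (qapply (sigma p1) s) = 0"
  shows "qip (qapply (sigma p0) s) (qapply (sigma p0) s) = 1"
    and "\<exists>c. (c = \<i> \<or> c = - \<i>) \<and> (\<forall>a<2. qapply (sigma p1) s a = c * qapply (sigma p0) s a
                 \<and> qapply (sigma p1) (qapply (sigma p0) s) a = - c * s a)"
proof -
  define A where "A = sigma p0"
  define B where "B = sigma p1"
  define t where "t = qapply A s"
  have AA: "a < 2 \<Longrightarrow> qapply A (qapply A x) a = x a" for a x unfolding A_def by (rule qapply_sigma_sigma)
  have AB: "a < 2 \<Longrightarrow> qapply B (qapply A x) a = - qapply A (qapply B x) a" for a x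
    unfolding A_def B_def using qapply_sigma_anticommute[OF p01[symmetric] p1 p0] by blast
  have Bh: "qip (qapply B x) y = qip x (qapply B y)" for x y unfolding B_def by (rule qip_sigma_hermitian)
  have tt: "qip t t = 1" using ss by (simp add: t_def A_def qip_qapply_sigma_self)
  have st: "qip s t = 0" using s0 by (simp add: t_def A_def)
  have ts: "qip t s = 0" using st cnj_qip[of s t] by simp
  define c where "c = qip t (qapply B s)"
  have Bs: "qapply B s a = c * t a" if "a < 2" for a
    using qubit_onb_expansion[OF ss tt st that, of "qapply B s"] s1 by (simp add: c_def B_def)
  have At: "qapply A t a = s a" if "a < 2" for a using AA[OF that] by (simp add: t_def)
  have Bt: "qapply B t a = - c * s a" if "a < 2" for a
  proof -
    have "qapply B t a = - qapply A (qapply B s) a" using AB[OF that] by (simp add: t_def)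
    also have "qapply A (qapply B s) = qapply A (\<lambda>a. c * t a)" by (rule qapply_cong) (simp add: Bs)
    also have "\<dots> a = c * s a" by (simp add: qapply_scale At that)
    finally show ?thesis by simp
  qed
  have cc: "cnj c = - c"
  proof -
    have "qip s (qapply B t) = qip s (\<lambda>a. - c * s a)" by (rule qip_cong) (simp_all add: Bt)
    also have "\<dots> = - c" using qip_scale_right[of s "- c" s] ss by simp
    finally have l: "qip s (qapply B t) = - c" .
    have "qip (qapply B s) t = qip (\<lambda>a. c * t a) t" by (rule qip_cong) (simp_all add: Bs)
    also have "\<dots> = cnj c" using qip_scale_left[of c t t] tt by simp
    finally have r: "qip (qapply B s) t = cnj c" .
    show ?thesis using l r Bh[of s t] by simp
  qed
  have "c * cnj c = 1"
  proof -
    have "qip (qapply B s) (qapply B s) = qip (\<lambda>a. c * t a) (\<lambda>a. c * t a)" by (rule qip_cong) (simp_all add: Bs)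
    also have "\<dots> = cnj c * (c * qip t t)" by (simp add: qip_scale_left qip_scale_right)
    finally show ?thesis using ss tt by (simp add: B_def qip_qapply_sigma_self mult.commute)
  qed
  with cc have cpm: "c = \<i> \<or> c = - \<i>" by (rule imaginary_unit_cases)
  show "qip (qapply (sigma p0) s) (qapply (sigma p0) s) = 1" using tt by (simp add: t_def A_def)
  show "\<exists>c. (c = \<i> \<or> c = - \<i>) \<and> (\<forall>a<2. qapply (sigma p1) s a = c * qapply (sigma p0) s a
                 \<and> qapply (sigma p1) (qapply (sigma p0) s) a = - c * s a)"
    using cpm Bs Bt unfolding t_def A_def B_def by blast
qed

lemma qrot_qrot_frame:
  assumes Bs: "\<And>a. a < 2 \<Longrightarrow> qapply B s a = c * qapply A s a"
    and Bt: "\<And>a. a < 2 \<Longrightarrow> qapply B (qapply A s) a = - c * s a"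
    and c: "c = \<i> \<or> c = - \<i>" and a: "a < 2"
  shows "qapply (qrot (if c = - \<i> then b else - b) B) (qapply (qrot g A) s) a
       = (of_real (cos g) * of_real (cos b) - \<i> * of_real (sin g) * of_real (sin b)) * s a
       + (\<i> * of_real (sin g) * of_real (cos b) + of_real (cos g) * of_real (sin b)) * qapply A s a"
proof -
  define t where "t = qapply A s"
  define \<beta> where "\<beta> = (if c = - \<i> then b else - b)"
  have "qapply (qrot g A) s a' = of_real (cos g) * s a' + \<i> * of_real (sin g) * t a'" if "a' < 2" for a'
    using that unfolding less_2_cases_iff
    by (elim disjE) (simp_all add: qrot_def qapply_def sum_lessThan_2 t_def idm_def algebra_simps)
  then have "qapply (qrot \<beta> B) (qapply (qrot g A) s)
      = qapply (qrot \<beta> B) (\<lambda>a. of_real (cos g) * s a + \<i> * of_real (sin g) * t a)"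
    by (intro qapply_cong)
  then have "qapply (qrot \<beta> B) (qapply (qrot g A) s) a
      = qapply (qrot \<beta> B) (\<lambda>a. of_real (cos g) * s a + \<i> * of_real (sin g) * t a) a"
    by simp
  also have "\<dots> = of_real (cos \<beta>) * (of_real (cos g) * s a + \<i> * of_real (sin g) * t a)
        + \<i> * of_real (sin \<beta>) * (of_real (cos g) * qapply B s a + \<i> * of_real (sin g) * qapply B t a)"
    using a unfolding less_2_cases_iff
    by (elim disjE) (simp_all add: qrot_def qapply_def sum_lessThan_2 idm_def algebra_simps)
  also have "\<dots> = of_real (cos \<beta>) * (of_real (cos g) * s a + \<i> * of_real (sin g) * t a)
        + \<i> * of_real (sin \<beta>) * (of_real (cos g) * c * t a - \<i> * of_real (sin g) * c * s a)"
    using a by (simp add: Bs Bt t_def algebra_simps)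
  also have "\<dots> = (of_real (cos g) * of_real (cos b) - \<i> * of_real (sin g) * of_real (sin b)) * s a
        + (\<i> * of_real (sin g) * of_real (cos b) + of_real (cos g) * of_real (sin b)) * t a"
    using c by (auto simp: \<beta>_def algebra_simps)
  finally show ?thesis by (simp add: \<beta>_def t_def)
qed

lemma qubit_rotations_reach:
  assumes p0: "p0 \<noteq> PI" and p1: "p1 \<noteq> PI" and p01: "p0 \<noteq> p1"
    and ss: "qip s s = 1" and s0: "qip s (qapply (sigma p0) s) = 0" and s1: "qip s (qapply (sigma p1) s) = 0"
    and ww: "qip w w = 1"
  shows "\<exists>\<beta> \<gamma> \<delta>. \<forall>a<2. qapply (qrot \<beta> (sigma p1)) (qapply (qrot \<gamma> (sigma p0)) s) a = cis \<delta> * w a"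
proof -
  define t where "t = qapply (sigma p0) s"
  have tt: "qip t t = 1" unfolding t_def by (rule qubit_frame(1)[OF p0 p1 p01 ss s0 s1])
  obtain c where c: "c = \<i> \<or> c = - \<i>"
    and Bs: "\<And>a. a < 2 \<Longrightarrow> qapply (sigma p1) s a = c * t a"
    and Bt: "\<And>a. a < 2 \<Longrightarrow> qapply (sigma p1) t a = - c * s a"
    using qubit_frame(2)[OF p0 p1 p01 ss s0 s1] unfolding t_def by blast
  have st: "qip s t = 0" using s0 by (simp add: t_def)
  have ts: "qip t s = 0" using st cnj_qip[of s t] by simp
  define ws where "ws = qip s w"
  define wt where "wt = qip t w"
  have wdec: "w a = ws * s a + wt * t a" if "a < 2" for a
    using qubit_onb_expansion[OF ss tt st that] by (simp add: ws_def wt_def)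
  have wunit: "(cmod ws)\<^sup>2 + (cmod wt)\<^sup>2 = 1"
  proof -
    have "qip w w = qip (\<lambda>a. ws * s a + wt * t a) (\<lambda>a. ws * s a + wt * t a)"
      by (rule qip_cong) (simp_all add: wdec)
    also have "\<dots> = cnj ws * ws + cnj wt * wt"
      by (simp add: qip_lin_left qip_lin_right ss tt st ts)
    also have "\<dots> = complex_of_real ((cmod ws)\<^sup>2 + (cmod wt)\<^sup>2)"
      by (simp only: of_real_add complex_norm_square mult.commute)
    finally show ?thesis using ww by (metis of_real_eq_1_iff)
  qed
  obtain b g th where bg:
      "ws = cis th * (of_real (cos g) * of_real (cos b) - \<i> * of_real (sin g) * of_real (sin b))"
      "wt = cis th * (\<i> * of_real (sin g) * of_real (cos b) + of_real (cos g) * of_real (sin b))"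
    using unit_pair_rotation_form[OF wunit] by blast
  have "qapply (qrot (if c = - \<i> then b else - b) (sigma p1)) (qapply (qrot g (sigma p0)) s) a
      = cis (- th) * w a" if a: "a < 2" for a
  proof -
    have h: "cis (- th) * (cis th * z) = z" for z
      by (simp add: mult.assoc[symmetric] cis_mult)
    have "qapply (qrot (if c = - \<i> then b else - b) (sigma p1)) (qapply (qrot g (sigma p0)) s) a
        = (of_real (cos g) * of_real (cos b) - \<i> * of_real (sin g) * of_real (sin b)) * s a
        + (\<i> * of_real (sin g) * of_real (cos b) + of_real (cos g) * of_real (sin b)) * t a"
      unfolding t_def by (rule qrot_qrot_frame[OF Bs[unfolded t_def] Bt[unfolded t_def] c a])
    also have "\<dots> = cis (- th) * ws * s a + cis (- th) * wt * t a" unfolding bg h ..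
    also have "\<dots> = cis (- th) * w a" using wdec[OF a] by (simp add: algebra_simps)
    finally show ?thesis .
  qed
  then show ?thesis by blast
qed

lemma qubit_rotations_reach_scaled:
  assumes p0: "p0 \<noteq> PI" and p1: "p1 \<noteq> PI" and p01: "p0 \<noteq> p1"
    and ss: "qip s s = 1" and s0: "qip s (qapply (sigma p0) s) = 0" and s1: "qip s (qapply (sigma p1) s) = 0"
  shows "\<exists>\<beta> \<gamma> c. cnj c * c = cnj (w 0) * w 0 + cnj (w 1) * w 1
           \<and> (\<forall>b<2. c * qapply (qrot \<beta> (sigma p1)) (qapply (qrot \<gamma> (sigma p0)) s) b = w b)"
proof -
  define r where "r = sqrt ((cmod (w 0))\<^sup>2 + (cmod (w 1))\<^sup>2)"
  have rr: "complex_of_real r * complex_of_real r = cnj (w 0) * w 0 + cnj (w 1) * w 1"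
    by (simp add: r_def mult.commute flip: of_real_mult complex_norm_square)
  show ?thesis
  proof (cases "r = 0")
    case True
    then have "w 0 = 0" "w 1 = 0" by (simp_all add: r_def)
    then show ?thesis by (auto simp: less_2_cases_iff)
  next
    case False
    moreover have "r \<ge> 0" by (simp add: r_def)
    ultimately have rpos: "r > 0" by linarith
    define u where "u = (\<lambda>b. w b / of_real r)"
    have "qip u u = (cnj (w 0) * w 0 + cnj (w 1) * w 1) / (of_real r * of_real r)"
      by (simp add: qip_def sum_lessThan_2 u_def add_divide_distrib)
    then have "qip u u = 1" using rpos unfolding rr[symmetric] by simp
    then obtain \<beta> \<gamma> \<delta> where bgd: "\<forall>a<2. qapply (qrot \<beta> (sigma p1)) (qapply (qrot \<gamma> (sigma p0)) s) a = cis \<delta> * u a"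
      using qubit_rotations_reach[OF p0 p1 p01 ss s0 s1] by blast
    show ?thesis
    proof (intro exI conjI allI impI)
      show "cnj (of_real r * cis (- \<delta>)) * (of_real r * cis (- \<delta>)) = cnj (w 0) * w 0 + cnj (w 1) * w 1"
      proof -
        have "cnj (of_real r * cis (- \<delta>)) * (of_real r * cis (- \<delta>))
            = of_real r * of_real r * (cis \<delta> * cis (- \<delta>))"
          by (simp add: cis_cnj mult_ac)
        then show ?thesis using rr by (simp add: cis_mult)
      qed
      show "of_real r * cis (- \<delta>) * qapply (qrot \<beta> (sigma p1)) (qapply (qrot \<gamma> (sigma p0)) s) b = w b"
        if "b < 2" for b
        using bgd that rpos by (simp add: u_def mult.assoc[symmetric] cis_mult flip: cis_inverse)
    qed
  qed
qed

lemma qrot_add: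
  assumes "mmul 2 R R = idm 2" "supported_mat 2 R"
  shows "mmul 2 (qrot a R) (qrot b R) = qrot (a + b) R"
proof -
  have "mmul 2 (qrot a R) (qrot b R) = (\<lambda>i j. of_real (cos a) * (of_real (cos b) * idm 2 i j + \<i> * of_real (sin b) * R i j)
          + \<i> * of_real (sin a) * (of_real (cos b) * R i j + \<i> * of_real (sin b) * idm 2 i j))"
    unfolding qrot_def mmul_add_left mmul_add_right mmul_scale_left mmul_scale_right mmul_idm_left mmul_idm_right assms(1)
      restrict_mat_supported[OF assms(2)] restrict_mat_supported[OF supported_mat_idm] by (simp add: algebra_simps)
  also have "\<dots> = qrot (a + b) R"
    by (auto simp: qrot_def cos_add sin_add algebra_simps intro!: ext)
  finally show ?thesis .
qed

lemma qrot_zero: "qrot 0 R = idm 2" by (simp add: qrot_def)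

lemma mmul_qrot: "mmul 2 (qrot t R) M = (\<lambda>a b. of_real (cos t) * restrict_mat 2 M a b + \<i> * of_real (sin t) * mmul 2 R M a b)"
  unfolding qrot_def mmul_add_left mmul_scale_left mmul_idm_left by simp

lemma qapply_mmul: "a < 2 \<Longrightarrow> qapply (mmul 2 A B) v a = qapply A (qapply B v) a"
  by (simp add: qapply_def mmul_def sum_lessThan_2 algebra_simps)

lemma qapply_idm: "a < 2 \<Longrightarrow> qapply (idm 2) v a = v a"
  by (auto simp: qapply_def idm_def sum_lessThan_2 less_2_cases_iff)

section \<open>One layer of the ansatz\<close>

context stabilizer_gens
begin

lemma layer_coefficients:
  assumes p0: "p0 \<noteq> PI" and p1: "p1 \<noteq> PI" and p01: "p0 \<noteq> p1"
    and ss: "qip sv sv = 1" and s0: "qip sv (qapply (sigma p0) sv) = 0" and s1: "qip sv (qapply (sigma p1) sv) = 0"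
    and phi: "(\<Sum>i<2 ^ Suc m. (cmod (\<phi> i))\<^sup>2) = 1"
  shows "\<exists>\<psi> \<beta> \<gamma>. (\<Sum>l<2 ^ m. (cmod (\<psi> l))\<^sup>2) = 1 \<and>
           (\<forall>l<2 ^ m. \<forall>b<2. (\<Sum>E\<in>Pow {..<m}. mvec (2 ^ m) (eigen_proj m gs E) \<psi> l
                 * qapply (qrot (\<beta> E) (sigma p1)) (qapply (qrot (\<gamma> E) (sigma p0)) sv) b) = \<phi> (l + b * 2 ^ m))"
proof -
  define d where "d = (2::nat) ^ m"
  define PE where "PE = Pow {..<m}"
  let ?V = "\<lambda>\<beta> \<gamma>. qapply (qrot \<beta> (sigma p1)) (qapply (qrot \<gamma> (sigma p0)) sv)"
  obtain e where e: "\<And>E i j. E \<in> PE \<Longrightarrow> i < d \<Longrightarrow> j < d \<Longrightarrow> eigen_proj m gs E i j = e E i * cnj (e E j)"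
    and ortho: "\<And>E E'. E \<in> PE \<Longrightarrow> E' \<in> PE \<Longrightarrow> (\<Sum>l<d. cnj (e E l) * e E' l) = (if E = E' then 1 else 0)"
    using eigen_basis unfolding PE_def d_def Pow_iff by blast
  have complete: "(\<Sum>E\<in>PE. e E l * cnj (e E l')) = idm d l l'" if "l < d" "l' < d" for l l'
    using sum_eigen_proj[of l l'] that e by (simp add: PE_def d_def)
  define wv where "wv = (\<lambda>E b. \<Sum>l<d. cnj (e E l) * \<phi> (l + b * d))"
  have "\<forall>E. \<exists>\<beta> \<gamma> c. cnj c * c = cnj (wv E 0) * wv E 0 + cnj (wv E 1) * wv E 1
           \<and> (\<forall>b<2. c * ?V \<beta> \<gamma> b = wv E b)"
    using qubit_rotations_reach_scaled[OF p0 p1 p01 ss s0 s1] by blast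
  then obtain \<beta> \<gamma> c where c: "\<And>E. cnj (c E) * c E = cnj (wv E 0) * wv E 0 + cnj (wv E 1) * wv E 1"
    and bgc: "\<And>E b. b < 2 \<Longrightarrow> c E * ?V (\<beta> E) (\<gamma> E) b = wv E b"
    by metis
  define \<psi> where "\<psi> = (\<lambda>l. \<Sum>E\<in>PE. c E * e E l)"
  have Ppsi: "mvec d (eigen_proj m gs E) \<psi> l = e E l * c E" if "E \<in> PE" "l < d" for E l
  proof -
    have "mvec d (eigen_proj m gs E) \<psi> l = e E l * (\<Sum>l'<d. cnj (e E l') * \<psi> l')"
      using that by (simp add: mvec_def e sum_distrib_left mult_ac)
    then show ?thesis
      using onb_coeff_combination[where I = PE and E = E and d = d and e = e and c = c] that ortho by (simp add: PE_def \<psi>_def)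
  qed
  have "(\<Sum>E\<in>PE. mvec d (eigen_proj m gs E) \<psi> l * ?V (\<beta> E) (\<gamma> E) b) = \<phi> (l + b * d)"
    if "l < d" "b < 2" for l b
  proof -
    have "(\<Sum>E\<in>PE. mvec d (eigen_proj m gs E) \<psi> l * ?V (\<beta> E) (\<gamma> E) b) = (\<Sum>E\<in>PE. e E l * wv E b)"
      using that by (intro sum.cong refl) (simp add: Ppsi bgc[symmetric] mult_ac)
    also have "\<dots> = (\<Sum>l'<d. (\<Sum>E\<in>PE. e E l * cnj (e E l')) * \<phi> (l' + b * d))"
      by (simp add: wv_def sum_distrib_left sum_distrib_right mult_ac sum.swap[of _ PE])
    also have "\<dots> = (\<Sum>l'<d. if l' = l then \<phi> (l + b * d) else 0)"
      using that complete by (intro sum.cong refl) (auto simp: idm_def)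
    finally show ?thesis using that by simp
  qed
  moreover have "(\<Sum>l<d. (cmod (\<psi> l))\<^sup>2) = 1"
  proof -
    have "complex_of_real (\<Sum>l<d. (cmod (\<psi> l))\<^sup>2) = (\<Sum>l<d. cnj (\<psi> l) * \<psi> l)"
      by (simp only: of_real_sum complex_norm_square mult.commute)
    also have "\<dots> = (\<Sum>E\<in>PE. cnj (c E) * c E)"
      unfolding \<psi>_def by (rule onb_combination_norm) (use ortho in \<open>simp_all add: PE_def\<close>)
    also have "\<dots> = (\<Sum>b<2. \<Sum>E\<in>PE. cnj (wv E b) * wv E b)"
      by (simp add: c sum.distrib sum_lessThan_2)
    also have "\<dots> = (\<Sum>b<2. \<Sum>l<d. cnj (\<phi> (l + b * d)) * \<phi> (l + b * d))"
      unfolding wv_def by (intro sum.cong refl onb_parseval complete)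
    also have "\<dots> = (\<Sum>i<2 * d. cnj (\<phi> i) * \<phi> i)"
      by (simp add: sum_mult_product)
    also have "\<dots> = complex_of_real (\<Sum>i<2 ^ Suc m. (cmod (\<phi> i))\<^sup>2)"
      by (simp only: of_real_sum complex_norm_square mult.commute d_def power_Suc)
    finally show ?thesis using phi by (metis of_real_eq_1_iff)
  qed
  ultimately show ?thesis unfolding d_def PE_def by blast
qed

end

text \<open>The start state of qubits \<open>k+1..N\<close>, re-indexed from bit \<open>0\<close>.\<close>
definition start_tail :: "nat \<Rightarrow> (nat \<Rightarrow> cvec) \<Rightarrow> nat \<Rightarrow> cvec" where
  "start_tail N s k = (\<lambda>j. \<Prod>q\<in>{k + 1..N}. s q (qbit (q - k) j))"

lemma start_tail_split:
  assumes "Suc m \<le> N"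
  shows "start_tail N s m h = s (Suc m) (h mod 2) * start_tail N s (Suc m) (h div 2)"
proof -
  have I: "{m + 1..N} = insert (Suc m) {Suc m + 1..N}" using assms by auto
  have q: "qbit (q - m) h = qbit (q - Suc m) (h div 2)" if "q \<in> {Suc m + 1..N}" for q
  proof -
    have e: "q - m - 1 = q - Suc m" "q - Suc m - 1 + 1 = q - Suc m" using that by auto
    have "h div 2 div 2 ^ (q - Suc m - 1) = h div 2 ^ (q - Suc m)"
      by (metis e(2) div_mult2_eq power_Suc Suc_eq_plus1 mult.commute)
    then show ?thesis by (simp add: qbit_def e(1))
  qed
  have "start_tail N s m h = s (Suc m) (qbit 1 h) * (\<Prod>q\<in>{Suc m + 1..N}. s q (qbit (q - m) h))"
    unfolding start_tail_def I by simp
  also have "\<dots> = s (Suc m) (h mod 2) * start_tail N s (Suc m) (h div 2)"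
  proof -
    have "(\<Prod>q\<in>{Suc m + 1..N}. s q (qbit (q - m) h)) = start_tail N s (Suc m) (h div 2)"
      unfolding start_tail_def by (rule prod.cong) (simp_all add: q)
    moreover have "qbit 1 h = h mod 2" by (simp add: qbit_def)
    ultimately show ?thesis by simp
  qed
  finally show ?thesis .
qed

lemma apply_low_start_tail:
  assumes "Suc m \<le> N"
  shows "apply_low M (start_tail N s m) h = qapply M (s (Suc m)) (h mod 2) * start_tail N s (Suc m) (h div 2)"
proof -
  have "apply_low M (start_tail N s m) h = (\<Sum>b<2. M (h mod 2) b * (s (Suc m) b * start_tail N s (Suc m) (h div 2)))"
    unfolding apply_low_def using start_tail_split[OF assms]
    by (intro sum.cong refl) simp
  then show ?thesis by (simp add: qapply_def sum_distrib_left mult_ac)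
qed

locale layer_setup = stabilizer_gens m gs for m gs +
  fixes N :: nat and SL :: "cmat list"
  assumes layer_le: "Suc m \<le> N" and SL_distinct: "distinct SL" and SL_set: "set SL = gen_prod m gs ` Pow {..<m}"
begin

definition gen_subset :: "nat \<Rightarrow> nat set" where
  "gen_subset k = inv_into (Pow {..<m}) (gen_prod m gs) (SL ! k)"

lemma gen_subset_spec:
  assumes "k < length SL"
  shows "gen_subset k \<subseteq> {..<m}" "gen_prod m gs (gen_subset k) = SL ! k"
proof -
  have mem: "SL ! k \<in> gen_prod m gs ` Pow {..<m}" using assms SL_set nth_mem by blast
  have "gen_subset k \<in> Pow {..<m}" unfolding gen_subset_def by (rule inv_into_into[OF mem])
  then show "gen_subset k \<subseteq> {..<m}" by simp
  show "gen_prod m gs (gen_subset k) = SL ! k" unfolding gen_subset_def by (rule f_inv_into_f[OF mem])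
qed

lemma gen_subset_bij: "bij_betw gen_subset {..<length SL} (Pow {..<m})"
proof -
  have b1: "bij_betw ((!) SL) {..<length SL} (gen_prod m gs ` Pow {..<m})"
    using SL_set SL_distinct by (intro bij_betw_nth) auto
  have b2: "bij_betw (inv_into (Pow {..<m}) (gen_prod m gs)) (gen_prod m gs ` Pow {..<m}) (Pow {..<m})"
    using gen_prod_inj by (intro bij_betw_inv_into) (simp add: inj_on_imp_bij_betw)
  have "bij_betw (inv_into (Pow {..<m}) (gen_prod m gs) \<circ> (!) SL) {..<length SL} (Pow {..<m})"
    by (rule bij_betw_trans[OF b1 b2])
  then show ?thesis unfolding gen_subset_def[abs_def] comp_def .
qed

text \<open>\<open>\<Sum>\<^sub>E P\<^sub>E \<psi> \<otimes> R\<^sub>E y\<close>: a layer acts on the \<open>E\<close>-th joint eigenspace of the first \<open>m\<close>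
  qubits by its own single-qubit operator \<open>R\<^sub>E\<close>, with angles given by Walsh transforms of the
  parameters.\<close>
definition branch_state :: "cvec \<Rightarrow> cvec \<Rightarrow> (nat set \<Rightarrow> cmat) \<Rightarrow> cvec" where
  "branch_state \<psi> y Rm = (\<lambda>i. \<Sum>E\<in>Pow {..<m}. tensor_vec N m (mvec (2 ^ m) (eigen_proj m gs E) \<psi>) (apply_low (Rm E) y) i)"

lemma restrict_vec_branch_state: "restrict_vec (2 ^ N) (branch_state \<psi> y Rm) = branch_state \<psi> y Rm"
  unfolding branch_state_def by (rule restrict_vec_sum) simp

lemma branch_state_restrict_mat: "branch_state \<psi> y (\<lambda>E. restrict_mat 2 (Rm E)) = branch_state \<psi> y Rm"
  by (simp add: branch_state_def apply_low_restrict_mat)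

lemma rot_branch_state:
  assumes k: "k < length SL"
  shows "mvec (2 ^ N) (rot N t (embed_RS N (Suc m) (sigma p) (SL ! k))) (branch_state \<psi> y Rm)
       = branch_state \<psi> y (\<lambda>E. mmul 2 (qrot (t * walsh_real E (gen_subset k)) (sigma p)) (Rm E))"
proof -
  define S where "S = SL ! k"
  define A where "A = gen_subset k"
  have A: "A \<subseteq> {..<m}" "gen_prod m gs A = S" using gen_subset_spec[OF k] by (simp_all add: A_def S_def)
  have hS: "herm_pauli m S" using gen_prod_herm_pauli A by auto
  have SS: "mmul (2 ^ m) S S = idm (2 ^ m)" by (rule herm_pauli_square[OF hS])
  have PP: "mmul (2 ^ N) (embed_RS N (Suc m) (sigma p) S) (embed_RS N (Suc m) (sigma p) S) = idm (2 ^ N)"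
    by (rule embed_RS_square[OF layer_le SS sigma_square])
  have fA: "finite A" using A(1) finite_subset by blast
  have Pst: "mvec (2 ^ N) (embed_RS N (Suc m) (sigma p) S) (branch_state \<psi> y Rm)
      = (\<lambda>i. \<Sum>E\<in>Pow {..<m}. of_real (walsh_real E A) * tensor_vec N m (mvec (2 ^ m) (eigen_proj m gs E) \<psi>) (apply_low (mmul 2 (sigma p) (Rm E)) y) i)"
    unfolding branch_state_def mvec_sum_vec embed_RS_tensor_vec[OF layer_le]
    by (simp add: gen_prod_eigen_proj[OF A(1)] A(2)[symmetric] tensor_vec_scale_left apply_low_apply_low walsh_of_real[OF fA])
  show ?thesis
    unfolding S_def[symmetric] A_def[symmetric] mvec_rot[OF PP] restrict_vec_branch_state Pst
    unfolding branch_state_def mmul_qrot apply_low_lin apply_low_restrict_mat tensor_vec_lin_right cos_mult_walsh_real sin_mult_walsh_real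
    by (auto simp: sum_distrib_left sum.distrib algebra_simps intro!: ext)
qed

lemma rot_list_branch_state:
  assumes "set L \<subseteq> {..<length SL}"
  shows "mvec (2 ^ N) (mprodl (2 ^ N) (map (\<lambda>k. rot N (th k) (embed_RS N (Suc m) (sigma p) (SL ! k))) L)) (branch_state \<psi> y Rm)
       = branch_state \<psi> y (\<lambda>E. mmul 2 (qrot (\<Sum>k\<leftarrow>L. th k * walsh_real E (gen_subset k)) (sigma p)) (Rm E))"
  using assms
proof (induction L)
  case Nil
  show ?case by (simp add: mvec_idm restrict_vec_branch_state qrot_zero mmul_idm_left branch_state_restrict_mat)
next
  case (Cons x L)
  have x: "x < length SL" using Cons.prems by auto
  have "mvec (2 ^ N) (mprodl (2 ^ N) (map (\<lambda>k. rot N (th k) (embed_RS N (Suc m) (sigma p) (SL ! k))) (x # L))) (branch_state \<psi> y Rm)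
      = branch_state \<psi> y (\<lambda>E. mmul 2 (qrot (th x * walsh_real E (gen_subset x)) (sigma p)) (mmul 2 (qrot (\<Sum>k\<leftarrow>L. th k * walsh_real E (gen_subset k)) (sigma p)) (Rm E)))"
    using Cons by (simp add: mvec_mmul rot_branch_state[OF x])
  also have "\<dots> = branch_state \<psi> y (\<lambda>E. mmul 2 (qrot (\<Sum>k\<leftarrow>x # L. th k * walsh_real E (gen_subset k)) (sigma p)) (Rm E))"
    by (simp add: mmul_assoc[symmetric] qrot_add[OF sigma_square supported_sigma])
  finally show ?case .
qed

lemma tensor_vec_as_branch_state: "tensor_vec N m \<psi> y = branch_state \<psi> y (\<lambda>E. idm 2)"
proof -
  have "branch_state \<psi> y (\<lambda>E. idm 2) = tensor_vec N m (\<lambda>l. \<Sum>E\<in>Pow {..<m}. mvec (2 ^ m) (eigen_proj m gs E) \<psi> l) y"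
    by (simp add: branch_state_def apply_low_idm tensor_vec_sum_left)
  also have "(\<lambda>l. \<Sum>E\<in>Pow {..<m}. mvec (2 ^ m) (eigen_proj m gs E) \<psi> l) = mvec (2 ^ m) (\<lambda>a b. \<Sum>E\<in>Pow {..<m}. eigen_proj m gs E a b) \<psi>"
    by (simp add: mvec_sum_mat)
  also have "\<dots> = restrict_vec (2 ^ m) \<psi>" by (simp add: sum_eigen_proj mvec_idm)
  finally show ?thesis by (simp add: tensor_vec_restrict_vec)
qed

lemma walsh_inverse:
  assumes E': "E' \<subseteq> {..<m}"
  shows "(\<Sum>k\<leftarrow>[0..<length SL]. ((1 / 2 ^ m) * (\<Sum>E\<in>Pow {..<m}. walsh_real E (gen_subset k) * g E)) * walsh_real E' (gen_subset k)) = g E'"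
proof -
  have "(\<Sum>k\<leftarrow>[0..<length SL]. ((1 / 2 ^ m) * (\<Sum>E\<in>Pow {..<m}. walsh_real E (gen_subset k) * g E)) * walsh_real E' (gen_subset k))
      = (\<Sum>k\<in>{..<length SL}. ((1 / 2 ^ m) * (\<Sum>E\<in>Pow {..<m}. walsh_real E (gen_subset k) * g E)) * walsh_real E' (gen_subset k))"
    by (simp add: sum_list_distinct_conv_sum_set atLeast0LessThan)
  also have "\<dots> = (\<Sum>A\<in>Pow {..<m}. ((1 / 2 ^ m) * (\<Sum>E\<in>Pow {..<m}. walsh_real E A * g E)) * walsh_real E' A)"
    by (rule sum.reindex_bij_betw[OF gen_subset_bij])
  also have "\<dots> = (1 / 2 ^ m) * (\<Sum>A\<in>Pow {..<m}. \<Sum>E\<in>Pow {..<m}. g E * (walsh_real E A * walsh_real E' A))"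
    by (simp add: sum_distrib_left sum_distrib_right mult_ac)
  also have "\<dots> = (1 / 2 ^ m) * (\<Sum>E\<in>Pow {..<m}. \<Sum>A\<in>Pow {..<m}. g E * (walsh_real E A * walsh_real E' A))"
    by (subst sum.swap) (rule refl)
  also have "\<dots> = (1 / 2 ^ m) * (\<Sum>E\<in>Pow {..<m}. g E * (\<Sum>A\<in>Pow {..<m}. walsh_real E A * walsh_real E' A))"
    by (simp add: sum_distrib_left)
  also have "\<dots> = (1 / 2 ^ m) * (\<Sum>E\<in>Pow {..<m}. if E = E' then g E * 2 ^ m else 0)"
    using E' by (intro arg_cong[where f = "(*) _"] sum.cong refl) (auto simp: walsh_real_orthogonal)
  also have "\<dots> = g E'" using E' by simp
  finally show ?thesis .
qed

lemma layer_branch_state: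
  assumes SL: "Sl (Suc m) = SL"
  shows "mvec (2 ^ N) (layer N Sl r \<theta> (Suc m)) (tensor_vec N m \<psi> y)
       = branch_state \<psi> y (\<lambda>E. mmul 2 (qrot (\<Sum>k\<leftarrow>[0..<length SL]. \<theta> (Suc m) k 1 * walsh_real E (gen_subset k)) (sigma (r (Suc m) 1)))
                         (mmul 2 (qrot (\<Sum>k\<leftarrow>[0..<length SL]. \<theta> (Suc m) k 0 * walsh_real E (gen_subset k)) (sigma (r (Suc m) 0))) (idm 2)))"
proof -
  have sub: "set [0..<length SL] \<subseteq> {..<length SL}" by auto
  show ?thesis
    unfolding layer_def SL mvec_mmul tensor_vec_as_branch_state
    by (simp only: rot_list_branch_state[OF sub])
qed

lemma layer_extends_state:
  fixes \<beta> \<gamma> :: "nat set \<Rightarrow> real"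
  assumes SL: "Sl (Suc m) = SL"
    and \<theta>: "\<theta> (Suc m) = (\<lambda>k j. (1 / 2 ^ m)
             * (\<Sum>E\<in>Pow {..<m}. walsh_real E (gen_subset k) * (if j = 0 then \<gamma> E else \<beta> E)))"
    and co: "\<And>l b. l < 2 ^ m \<Longrightarrow> b < 2 \<Longrightarrow> (\<Sum>E\<in>Pow {..<m}. mvec (2 ^ m) (eigen_proj m gs E) \<psi> l
               * qapply (qrot (\<beta> E) (sigma (r (Suc m) 1))) (qapply (qrot (\<gamma> E) (sigma (r (Suc m) 0))) (s (Suc m))) b)
             = \<phi> (l + b * 2 ^ m)"
  shows "mvec (2 ^ N) (layer N Sl r \<theta> (Suc m)) (tensor_vec N m \<psi> (start_tail N s m))
       = tensor_vec N (Suc m) \<phi> (start_tail N s (Suc m))"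
proof -
  define Rm where "Rm = (\<lambda>E. mmul 2 (qrot (\<Sum>k\<leftarrow>[0..<length SL]. \<theta> (Suc m) k 1 * walsh_real E (gen_subset k)) (sigma (r (Suc m) 1)))
                         (mmul 2 (qrot (\<Sum>k\<leftarrow>[0..<length SL]. \<theta> (Suc m) k 0 * walsh_real E (gen_subset k)) (sigma (r (Suc m) 0))) (idm 2)))"
  have Rm: "qapply (Rm E) (s (Suc m)) b
      = qapply (qrot (\<beta> E) (sigma (r (Suc m) 1))) (qapply (qrot (\<gamma> E) (sigma (r (Suc m) 0))) (s (Suc m))) b"
    if E: "E \<in> Pow {..<m}" and b: "b < 2" for E b
  proof -
    have "(\<Sum>k\<leftarrow>[0..<length SL]. \<theta> (Suc m) k 0 * walsh_real E (gen_subset k)) = \<gamma> E"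
      and "(\<Sum>k\<leftarrow>[0..<length SL]. \<theta> (Suc m) k 1 * walsh_real E (gen_subset k)) = \<beta> E"
      using walsh_inverse[of E \<gamma>] walsh_inverse[of E \<beta>] E by (simp_all add: \<theta>)
    then have "qapply (Rm E) (s (Suc m)) b
        = qapply (qrot (\<beta> E) (sigma (r (Suc m) 1))) (qapply (mmul 2 (qrot (\<gamma> E) (sigma (r (Suc m) 0))) (idm 2)) (s (Suc m))) b"
      unfolding Rm_def using b by (simp only: qapply_mmul)
    also have "qapply (qrot (\<beta> E) (sigma (r (Suc m) 1))) (qapply (mmul 2 (qrot (\<gamma> E) (sigma (r (Suc m) 0))) (idm 2)) (s (Suc m)))
        = qapply (qrot (\<beta> E) (sigma (r (Suc m) 1))) (qapply (qrot (\<gamma> E) (sigma (r (Suc m) 0))) (qapply (idm 2) (s (Suc m))))"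
      by (rule qapply_cong) (rule qapply_mmul)
    also have "qapply (qrot (\<gamma> E) (sigma (r (Suc m) 0))) (qapply (idm 2) (s (Suc m)))
        = qapply (qrot (\<gamma> E) (sigma (r (Suc m) 0))) (s (Suc m))"
      by (rule qapply_cong) (rule qapply_idm)
    finally show ?thesis .
  qed
  have "branch_state \<psi> (start_tail N s m) Rm i = tensor_vec N (Suc m) \<phi> (start_tail N s (Suc m)) i" for i
  proof (cases "i < 2 ^ N")
    case False then show ?thesis by (simp add: branch_state_def tensor_vec_def)
  next
    case True
    define l where "l = i mod 2 ^ m"
    define b where "b = i div 2 ^ m mod 2"
    have l: "l < 2 ^ m" and b: "b < 2" by (simp_all add: l_def b_def)
    have "branch_state \<psi> (start_tail N s m) Rm i = (\<Sum>E\<in>Pow {..<m}. mvec (2 ^ m) (eigen_proj m gs E) \<psi> l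
          * qapply (Rm E) (s (Suc m)) b) * start_tail N s (Suc m) (i div 2 ^ m div 2)"
      using True by (simp add: branch_state_def tensor_vec_def apply_low_start_tail[OF layer_le] l_def b_def
          sum_distrib_left mult_ac)
    also have "\<dots> = \<phi> (l + b * 2 ^ m) * start_tail N s (Suc m) (i div 2 ^ m div 2)"
      using co[OF l b] by (simp add: Rm b)
    also have "\<dots> = tensor_vec N (Suc m) \<phi> (start_tail N s (Suc m)) i"
    proof -
      have "i mod 2 ^ Suc m = l + b * 2 ^ m" unfolding l_def b_def power_Suc2 mod_mult2_eq by simp
      then show ?thesis using True unfolding tensor_vec_def div_pow_Suc by simp
    qed
    finally show ?thesis .
  qed
  then show ?thesis unfolding layer_branch_state[where Sl = Sl, OF SL] Rm_def[symmetric] by blast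
qed

end

lemma ansatz_layer_setup:
  assumes ans: "stabilizer_ansatz N Sl s r" and n: "Suc m \<le> N"
  shows "\<exists>gs. layer_setup m gs N (Sl (Suc m))"
proof -
  have mem: "Suc m \<in> {1..N}" using n by auto
  have "distinct (Sl (Suc m)) \<and> stabilizer_group (Suc m - 1) (set (Sl (Suc m)))"
    using bspec[OF ans[unfolded stabilizer_ansatz_def] mem] by blast
  then have "distinct (Sl (Suc m))" "stabilizer_group m (set (Sl (Suc m)))" by simp_all
  then obtain gs where gs: "length gs = m" "\<forall>g\<in>set gs. herm_pauli m g"
      "\<forall>g\<in>set gs. \<forall>h\<in>set gs. mmul (2 ^ m) g h = mmul (2 ^ m) h g"
      "inj_on (gen_prod m gs) (Pow {..<m})" "set (Sl (Suc m)) = gen_prod m gs ` Pow {..<m}"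
      "\<forall>M\<in>set (Sl (Suc m)). herm_pauli m M" "(\<lambda>i j. - idm (2 ^ m) i j) \<notin> set (Sl (Suc m))"
      and d: "distinct (Sl (Suc m))"
    unfolding stabilizer_group_def by auto
  have "layer_setup m gs N (Sl (Suc m))"
  proof (intro layer_setup.intro stabilizer_gens.intro layer_setup_axioms.intro)
    show "\<forall>A\<in>Pow {..<m}. herm_pauli m (gen_prod m gs A)" using gs(5,6) by auto
    show "(\<lambda>i j. - idm (2 ^ m) i j) \<notin> gen_prod m gs ` Pow {..<m}" using gs(5,7) by simp
  qed (use gs d n in auto)
  then show ?thesis by blast
qed

lemma ansatz_qubit_conditions:
  assumes ans: "stabilizer_ansatz N Sl s r" and n: "Suc m \<le> N"
  shows "r (Suc m) 0 \<noteq> PI" "r (Suc m) 1 \<noteq> PI" "r (Suc m) 0 \<noteq> r (Suc m) 1"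
    "qip (s (Suc m)) (s (Suc m)) = 1"
    "qip (s (Suc m)) (qapply (sigma (r (Suc m) 0)) (s (Suc m))) = 0"
    "qip (s (Suc m)) (qapply (sigma (r (Suc m) 1)) (s (Suc m))) = 0"
proof -
  have mem: "Suc m \<in> {1..N}" using n by auto
  have h: "(cmod (s (Suc m) 0))\<^sup>2 + (cmod (s (Suc m) 1))\<^sup>2 = 1"
      "\<forall>j\<in>{0,1::nat}. (\<Sum>a<2. \<Sum>b<2. cnj (s (Suc m) a) * sigma (r (Suc m) j) a b * s (Suc m) b) = 0"
      "(\<Sum>a<2. \<Sum>b<2. sigma (r (Suc m) 0) a b * sigma (r (Suc m) 1) b a) = 0"
    using bspec[OF ans[unfolded stabilizer_ansatz_def] mem] by auto
  let ?s = "s (Suc m)"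
  show ss: "qip ?s ?s = 1"
  proof -
    have e: "qip ?s ?s = complex_of_real ((cmod (?s 0))\<^sup>2 + (cmod (?s 1))\<^sup>2)"
      by (simp only: qip_def sum_lessThan_2 of_real_add complex_norm_square mult.commute)
    show ?thesis unfolding e h(1) by simp
  qed
  have e: "qip ?s (qapply (sigma p) ?s) = (\<Sum>a<2. \<Sum>b<2. cnj (?s a) * sigma p a b * ?s b)" for p
    by (simp add: qip_def qapply_def sum_distrib_left mult_ac)
  show s0: "qip ?s (qapply (sigma (r (Suc m) 0)) ?s) = 0" using h(2) e by simp
  show s1: "qip ?s (qapply (sigma (r (Suc m) 1)) ?s) = 0" using h(2) e by simp
  have I: "qip ?s (qapply (sigma PI) ?s) = 1"
  proof -
    have "qip ?s (qapply (sigma PI) ?s) = qip ?s ?s"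
      by (rule qip_cong) (auto simp: qapply_def sigma_def sum_lessThan_2 less_2_cases_iff)
    then show ?thesis using ss by simp
  qed
  show "r (Suc m) 0 \<noteq> PI" using s0 I by auto
  show "r (Suc m) 1 \<noteq> PI" using s1 I by auto
  show "r (Suc m) 0 \<noteq> r (Suc m) 1"
  proof
    assume eq: "r (Suc m) 0 = r (Suc m) 1"
    have "(\<Sum>a<2. \<Sum>b<2. sigma (r (Suc m) 0) a b * sigma (r (Suc m) 0) b a) = (\<Sum>a<2::nat. 1)"
      by (intro sum.cong refl) (simp add: sigma_square_entry)
    then show False using h(3) eq by simp
  qed
qed

lemma start_state_as_tensor_vec: "start_state N s = tensor_vec N 0 (\<lambda>_. 1) (start_tail N s 0)"
  by (auto simp: start_state_def tensor_vec_def start_tail_def)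

lemma ansatz_prefix_reach:
  assumes ans: "stabilizer_ansatz N Sl s r"
  shows "k \<le> N \<Longrightarrow> (\<Sum>i<2 ^ k. (cmod (\<phi> i))\<^sup>2) = 1 \<Longrightarrow>
    \<exists>\<theta> \<alpha>. mvec (2 ^ N) (mprodl (2 ^ N) (map (layer N Sl r \<theta>) (rev [1..<k + 1]))) (start_state N s)
         = (\<lambda>i. cis \<alpha> * tensor_vec N k \<phi> (start_tail N s k) i)"
proof (induction k arbitrary: \<phi>)
  case 0
  then have "cmod (\<phi> 0) = 1" by (simp add: power2_eq_1_iff) (use norm_ge_zero[of "\<phi> 0"] in linarith)
  moreover define a where "a = Arg (\<phi> 0)"
  ultimately have "\<phi> 0 = cis a" using rcis_cmod_Arg[of "\<phi> 0"] by (simp add: rcis_def)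
  then have "tensor_vec N 0 (\<lambda>_. 1) (start_tail N s 0) = (\<lambda>i. cis (- a) * tensor_vec N 0 \<phi> (start_tail N s 0) i)"
    by (auto simp: tensor_vec_def cis_mult)
  moreover have "mvec (2 ^ N) (mprodl (2 ^ N) (map (layer N Sl r \<theta>) (rev [1..<0 + 1]))) (start_state N s)
      = tensor_vec N 0 (\<lambda>_. 1) (start_tail N s 0)" for \<theta>
    by (simp add: mvec_idm start_state_as_tensor_vec)
  ultimately show ?case by auto
next
  case (Suc k)
  have kN: "Suc k \<le> N" using Suc.prems by auto
  obtain gs where "layer_setup k gs N (Sl (Suc k))" using ansatz_layer_setup[OF ans kN] by blast
  interpret L: layer_setup k gs N "Sl (Suc k)" by fact
  obtain \<psi> \<beta> \<gamma> where psi: "(\<Sum>l<2 ^ k. (cmod (\<psi> l))\<^sup>2) = 1"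
      and co: "\<And>l b. l < 2 ^ k \<Longrightarrow> b < 2 \<Longrightarrow> (\<Sum>E\<in>Pow {..<k}. mvec (2 ^ k) (eigen_proj k gs E) \<psi> l
                 * qapply (qrot (\<beta> E) (sigma (r (Suc k) 1))) (qapply (qrot (\<gamma> E) (sigma (r (Suc k) 0))) (s (Suc k))) b)
               = \<phi> (l + b * 2 ^ k)"
    using L.layer_coefficients[OF ansatz_qubit_conditions[OF ans kN] Suc.prems(2)] by blast
  obtain \<theta>' \<alpha> where IH: "mvec (2 ^ N) (mprodl (2 ^ N) (map (layer N Sl r \<theta>') (rev [1..<k + 1]))) (start_state N s)
         = (\<lambda>i. cis \<alpha> * tensor_vec N k \<psi> (start_tail N s k) i)"
    using Suc.IH[OF _ psi] kN by auto
  define \<theta> where "\<theta> = \<theta>'(Suc k := (\<lambda>k' j. (1 / 2 ^ k)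
      * (\<Sum>E\<in>Pow {..<k}. walsh_real E (L.gen_subset k') * (if j = 0 then \<gamma> E else \<beta> E))))"
  have "map (layer N Sl r \<theta>) (rev [1..<k + 1]) = map (layer N Sl r \<theta>') (rev [1..<k + 1])"
    by (intro map_cong refl) (auto simp: layer_def \<theta>_def)
  moreover have "rev [1..<Suc k + 1] = Suc k # rev [1..<k + 1]" by simp
  ultimately have "mvec (2 ^ N) (mprodl (2 ^ N) (map (layer N Sl r \<theta>) (rev [1..<Suc k + 1]))) (start_state N s)
      = mvec (2 ^ N) (layer N Sl r \<theta> (Suc k)) (\<lambda>i. cis \<alpha> * tensor_vec N k \<psi> (start_tail N s k) i)"
    by (simp only: list.map mprodl.simps mvec_mmul IH)
  also have "\<dots> = (\<lambda>i. cis \<alpha> * tensor_vec N (Suc k) \<phi> (start_tail N s (Suc k)) i)"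
    unfolding mvec_scale_vec by (subst L.layer_extends_state[where Sl = Sl and \<theta> = \<theta> and \<beta> = \<beta> and \<gamma> = \<gamma> and \<psi> = \<psi>
        and \<phi> = \<phi> and s = s and r = r, OF refl _ co]) (simp_all add: \<theta>_def)
  finally show ?case by blast
qed

lemma ansatz_reaches_every_state:
  assumes "stabilizer_ansatz N Sl s r" "unit_vec (2 ^ N) \<phi>"
  shows "\<exists>\<theta> \<alpha>. \<forall>i < 2 ^ N. mvec (2 ^ N) (ansatz_U N Sl r \<theta>) (start_state N s) i = cis \<alpha> * \<phi> i"
proof -
  obtain \<theta> \<alpha> where "mvec (2 ^ N) (ansatz_U N Sl r \<theta>) (start_state N s)
      = (\<lambda>i. cis \<alpha> * tensor_vec N N \<phi> (start_tail N s N) i)"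
    using ansatz_prefix_reach[OF assms(1) le_refl] assms(2) unfolding unit_vec_def ansatz_U_def by blast
  then have "\<forall>i < 2 ^ N. mvec (2 ^ N) (ansatz_U N Sl r \<theta>) (start_state N s) i = cis \<alpha> * \<phi> i"
    by (simp add: tensor_vec_def start_tail_def)
  then show ?thesis by blast
qed

section \<open>Parameter count and minimality\<close>

lemma sum_pow2_times2: "(\<Sum>n\<in>{1..N}. (2::nat) ^ (n - 1) * 2) = 2 * (2 ^ N - 1)"
proof (induction N)
  case 0 then show ?case by simp
next
  case (Suc N)
  have "{1..Suc N} = insert (Suc N) {1..N}" by auto
  then have "(\<Sum>n\<in>{1..Suc N}. (2::nat) ^ (n - 1) * 2) = 2 ^ N * 2 + (\<Sum>n\<in>{1..N}. 2 ^ (n - 1) * 2)"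
    by simp
  also have "\<dots> = 2 ^ N * 2 + 2 * (2 ^ N - 1)" using Suc.IH by simp
  also have "\<dots> = 2 * (2 ^ Suc N - 1)"
  proof -
    have "(1::nat) \<le> 2 ^ N" by simp
    moreover have "(2::nat) ^ Suc N = 2 * 2 ^ N" by simp
    ultimately show ?thesis by arith
  qed
  finally show ?case .
qed

lemma card_param_index:
  assumes ans: "stabilizer_ansatz N Sl s r"
  shows "card (param_index N Sl) = 2 * (2 ^ N - 1)"
proof -
  have length_Sl: "length (Sl n) = 2 ^ (n - 1)" if n: "n \<in> {1..N}" for n
  proof -
    obtain m where m: "n = Suc m" using n by (cases n) auto
    have mN: "Suc m \<le> N" using n m by auto
    obtain gs where "layer_setup m gs N (Sl (Suc m))" using ansatz_layer_setup[OF ans mN] by blast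
    then interpret L: layer_setup m gs N "Sl (Suc m)" .
    have "length (Sl (Suc m)) = card (set (Sl (Suc m)))" using L.SL_distinct by (simp add: distinct_card)
    also have "\<dots> = card (Pow {..<m})" using L.SL_set L.gen_prod_inj by (simp add: card_image)
    also have "\<dots> = 2 ^ m" by (simp add: card_Pow)
    finally show ?thesis using m by simp
  qed
  have eq: "param_index N Sl = Sigma {1..N} (\<lambda>n. {..<length (Sl n)} \<times> {0, 1})"
    by (auto simp: param_index_def)
  have "card (param_index N Sl) = (\<Sum>n\<in>{1..N}. card ({..<length (Sl n)} \<times> {0::nat, 1}))"
    unfolding eq by (rule card_SigmaI) auto
  also have "\<dots> = (\<Sum>n\<in>{1..N}. 2 ^ (n - 1) * 2)"
    by (intro sum.cong refl) (simp add: card_cartesian_product length_Sl)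
  also have "\<dots> = 2 * (2 ^ N - 1)" by (rule sum_pow2_times2)
  finally show ?thesis .
qed

lemma differentiable_Re_Im_rescaled:
  fixes F :: "'a::real_normed_vector \<Rightarrow> complex"
  assumes "F differentiable_on UNIV"
  shows "(\<lambda>p::('a \<times> real \<times> real). Re (complex_of_real (snd (snd p)) * cis (- fst (snd p)) * F (fst p))) differentiable (at p)"
    and "(\<lambda>p::('a \<times> real \<times> real). Im (complex_of_real (snd (snd p)) * cis (- fst (snd p)) * F (fst p))) differentiable (at p)"
proof -
  have d1: "(\<lambda>p::('a \<times> real \<times> real). F (fst p)) differentiable (at p)"
  proof -
    have Fd: "F differentiable (at (fst p))" using assms by (simp add: differentiable_on_def)
    have fd: "fst differentiable (at p)" by (rule bounded_linear_imp_differentiable[OF bounded_linear_fst])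
    show ?thesis by (rule differentiable_compose[OF Fd fd])
  qed
  have d2: "(\<lambda>p::('a \<times> real \<times> real). cis (- fst (snd p))) differentiable (at p)"
    by (rule differentiableI, rule has_derivative_cis) (auto intro!: derivative_eq_intros)
  have d3: "(\<lambda>p::('a \<times> real \<times> real). complex_of_real (snd (snd p))) differentiable (at p)"
    by (rule differentiableI) (auto intro!: derivative_eq_intros)
  have d: "(\<lambda>p::('a \<times> real \<times> real). complex_of_real (snd (snd p)) * cis (- fst (snd p)) * F (fst p)) differentiable (at p)"
    by (intro differentiable_mult d1 d2 d3)
  have Red: "Re differentiable (at z)" for z by (rule bounded_linear_imp_differentiable[OF bounded_linear_Re])
  have Imd: "Im differentiable (at z)" for z by (rule bounded_linear_imp_differentiable[OF bounded_linear_Im])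
  show "(\<lambda>p::('a \<times> real \<times> real). Re (complex_of_real (snd (snd p)) * cis (- fst (snd p)) * F (fst p))) differentiable (at p)"
    by (rule differentiable_compose[OF Red d])
  show "(\<lambda>p::('a \<times> real \<times> real). Im (complex_of_real (snd (snd p)) * cis (- fst (snd p)) * F (fst p))) differentiable (at p)"
    by (rule differentiable_compose[OF Imd d])
qed

lemma exists_nonzero_not_in_range_lowdim:
  fixes g :: "'a::euclidean_space \<Rightarrow> 'b::euclidean_space"
  assumes "DIM('a) < DIM('b)" "g differentiable_on UNIV"
  obtains y where "y \<noteq> 0" "y \<notin> range g"
proof (rule ccontr)
  assume "\<not> thesis"
  then have "UNIV \<subseteq> insert 0 (range g)" using that by blast
  moreover have "negligible (range g)" by (rule negligible_differentiable_image_lowdim[OF assms])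
  ultimately have "negligible (UNIV :: 'b set)" by (metis negligible_insert negligible_subset)
  then show False using non_negligible_UNIV by blast
qed

lemma nonzero_vec_as_scaled_unit_vec:
  assumes "j0 < d" "v j0 \<noteq> 0"
  shows "\<exists>n>0. \<exists>\<phi>. unit_vec d \<phi> \<and> (\<forall>j. v j = complex_of_real n * \<phi> j)"
proof -
  define S where "S = (\<Sum>j<d. (cmod (v j))\<^sup>2)"
  have "(cmod (v j0))\<^sup>2 \<le> S" unfolding S_def using assms(1) by (intro member_le_sum) auto
  moreover have "(cmod (v j0))\<^sup>2 > 0" using assms(2) by simp
  ultimately have S: "S > 0" by linarith
  have "unit_vec d (\<lambda>j. v j / complex_of_real (sqrt S))"
    using S by (simp add: unit_vec_def norm_divide power_divide S_def flip: sum_divide_distrib)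
  moreover have "v j = complex_of_real (sqrt S) * (v j / complex_of_real (sqrt S))" for j
    using S by simp
  ultimately show ?thesis using S by (intro exI[of _ "sqrt S"]) auto
qed

text \<open>If \<open>f\<close> reached every state up to a phase, then \<open>(x, \<alpha>, n) \<mapsto> n e\<^sup>-\<^sup>i\<^sup>\<alpha> f x\<close> would
  reach every nonzero vector of \<open>\<complex>\<^sup>2\<^sup>^\<^sup>N\<close>; projecting to \<open>CARD('k) + 3 \<le> 2\<^sup>N\<^sup>+\<^sup>1\<close> real
  coordinates gives a differentiable map from a space of dimension \<open>CARD('k) + 2\<close> onto all nonzero
  vectors of a space of dimension \<open>CARD('k) + 3\<close>, which Sard's lemma rules out.\<close>

lemma no_lowdim_smooth_cover:
  fixes f :: "real ^ 'k \<Rightarrow> cvec"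
  assumes card: "CARD('k) < 2 * (2 ^ N - 1)"
    and diff: "\<forall>i < 2 ^ N. (\<lambda>x. f x i) differentiable_on UNIV"
    and covers: "\<forall>\<phi>. unit_vec (2 ^ N) \<phi> \<longrightarrow> (\<exists>x \<alpha>. \<forall>i < 2 ^ N. f x i = cis \<alpha> * \<phi> i)"
  shows False
proof -
  have le: "CARD('k option option option) \<le> 2 ^ Suc N" using card by simp
  obtain idx :: "'k option option option \<Rightarrow> nat"
    where bij: "bij_betw idx UNIV {0..<CARD('k option option option)}"
    using ex_bij_betw_finite_nat[of "UNIV :: 'k option option option set"] by auto
  then have inj: "inj idx" by (simp add: bij_betw_def)
  have idx: "idx i div 2 < 2 ^ N" for i
  proof -
    have "idx i \<in> {0..<CARD('k option option option)}" using bij by (auto simp: bij_betw_def)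
    then show ?thesis using le by simp
  qed
  define cc where "cc = (\<lambda>(v::cvec) j. if even j then Re (v (j div 2)) else Im (v (j div 2)))"
  define h where "h = (\<lambda>j (p::(real^'k) \<times> real \<times> real). complex_of_real (snd (snd p)) * cis (- fst (snd p)) * f (fst p) j)"
  define g :: "(real^'k) \<times> real \<times> real \<Rightarrow> real ^ ('k option option option)"
    where "g = (\<lambda>p. \<Sum>i\<in>UNIV. cc (\<lambda>j. h j p) (idx i) *\<^sub>R axis i 1)"
  have g: "g p $ i = cc (\<lambda>j. h j p) (idx i)" for p i
    by (simp add: g_def sum_component axis_def if_distrib cong: if_cong)
  have gdiff: "g differentiable_on UNIV"
    unfolding differentiable_on_def
  proof
    fix p :: "(real^'k) \<times> real \<times> real"
    have "(\<lambda>p. cc (\<lambda>j. h j p) (idx i)) differentiable (at p)" for i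
    proof -
      have "(\<lambda>x. f x (idx i div 2)) differentiable_on UNIV" using diff idx by blast
      note d = differentiable_Re_Im_rescaled[OF this]
      have "(\<lambda>p. cc (\<lambda>j. h j p) (idx i))
          = (if even (idx i) then (\<lambda>p. Re (h (idx i div 2) p)) else (\<lambda>p. Im (h (idx i div 2) p)))"
        by (auto simp: cc_def)
      then show ?thesis unfolding h_def by (cases "even (idx i)") (simp_all only: if_True if_False d)
    qed
    then show "g differentiable at p within UNIV"
      unfolding g_def by (intro differentiable_sum) (auto intro!: differentiable_scaleR)
  qed
  have "DIM((real^'k) \<times> real \<times> real) < DIM(real ^ ('k option option option))" by simp
  then obtain y where y: "y \<noteq> 0" "y \<notin> range g"
    using exists_nonzero_not_in_range_lowdim gdiff by blast
  define coord where "coord = (\<lambda>c. if c \<in> range idx then y $ (inv idx c) else 0)"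
  define v where "v = (\<lambda>j. Complex (coord (2 * j)) (coord (2 * j + 1)))"
  have ccv: "cc v (idx i) = y $ i" for i
    by (cases "even (idx i)") (auto simp: cc_def v_def coord_def inj elim!: oddE)
  obtain i0 where "y $ i0 \<noteq> 0" using y(1) by (auto simp: vec_eq_iff)
  then have "v (idx i0 div 2) \<noteq> 0" using ccv[of i0] by (auto simp: cc_def split: if_splits)
  then obtain n \<phi> where n: "n > 0" and \<phi>: "unit_vec (2 ^ N) \<phi>" "\<And>j. v j = complex_of_real n * \<phi> j"
    using nonzero_vec_as_scaled_unit_vec[OF idx] by blast
  obtain x \<alpha> where "\<forall>i < 2 ^ N. f x i = cis \<alpha> * \<phi> i" using covers \<phi>(1) by blast
  then have "h j (x, \<alpha>, n) = v j" if "j < 2 ^ N" for j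
    using that by (simp add: h_def \<phi>(2) cis_mult mult.assoc[symmetric] flip: cis_inverse)
  then have "g (x, \<alpha>, n) = y"
    using idx by (simp add: vec_eq_iff g cc_def ccv[symmetric])
  then show False using y(2) by (metis rangeI)
qed

theorem theorem1:
  fixes N :: nat
    and Sl :: "nat \<Rightarrow> cmat list"
    and s :: "nat \<Rightarrow> cvec"
    and r :: "nat \<Rightarrow> nat \<Rightarrow> pauli"
  assumes "N \<ge> 1"
    and "stabilizer_ansatz N Sl s r"
  shows "card (param_index N Sl) = 2 * (2 ^ N - 1)
       \<and> (\<forall>f :: real ^ 'k \<Rightarrow> cvec.
            CARD('k) < 2 * (2 ^ N - 1)
            \<and> (\<forall>i < 2 ^ N. (\<lambda>x. f x i) differentiable_on UNIV)
            \<longrightarrow> \<not> (\<forall>\<phi>. unit_vec (2 ^ N) \<phi> \<longrightarrow>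
                     (\<exists>x \<alpha>. \<forall>i < 2 ^ N. f x i = cis \<alpha> * \<phi> i)))
       \<and> (\<forall>\<phi>. unit_vec (2 ^ N) \<phi> \<longrightarrow>
            (\<exists>\<theta> \<alpha>. \<forall>i < 2 ^ N.
               mvec (2 ^ N) (ansatz_U N Sl r \<theta>) (start_state N s) i = cis \<alpha> * \<phi> i))"
  using card_param_index[OF assms(2)] no_lowdim_smooth_cover ansatz_reaches_every_state[OF assms(2)]
  by blast

end
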